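(* Let $G$ be a finite group. Then every subgroup of $G$ (including $G$ itself) is $\psi$-divisible if and only if $G$ is cyclic of square-free order.
   Context: For a finite group $G$, $\psi(G)=\sum_{x\in G} o(x)$ denotes the sum of the orders of all elements of $G$. A finite group $G$ is called $\psi$-divisible if $\psi(H)$ divides $\psi(G)$ for every subgroup $H$ of $G$. *)

theory Defs
  imports "HOL-Algebra.Algebra" "HOL-Computational_Algebra.Squarefree"
begin

definition psi :: "('a, 'b) monoid_scheme \<Rightarrow> nat" where
  "psi G = (\<Sum>x\<in>carrier G. group.ord G x)"

definition psi_divisible :: "('a, 'b) monoid_scheme \<Rightarrow> bool" where
  "psi_divisible G \<longleftrightarrow> (\<forall>H. subgroup H G \<longrightarrow> psi (G\<lparr>carrier := H\<rparr>) dvd psi G)"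

end

theory Submission
  imports Defs
begin

text \<open>
  If \<open>G\<close> is cyclic of square-free order and \<open>K \<le> H \<le> G\<close>, then \<open>H = K L\<close> for the subgroup
  \<open>L\<close> of order \<open>|H|/|K|\<close>, which is coprime to \<open>|K|\<close>; element orders multiply across this
  product, so \<open>\<psi>(H) = \<psi>(K) \<psi>(L)\<close>.

  Conversely, let all subgroups of \<open>G\<close> be \<open>\<psi>\<close>-divisible. A subgroup of order \<open>p\<^sup>2\<close> would be
  cyclic or elementary abelian, and in neither case is its \<open>\<psi>\<close> divisible by
  \<open>\<psi>(C\<^sub>p) = 1 + (p - 1) p\<close>; so \<open>|G|\<close> is square-free. A non-cyclic subgroup of least order has
  only cyclic, hence abelian, proper subgroups, and it is not abelian, because an abelian group
  of square-free order is cyclic. In such a group the centralisers of non-central elements are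
  maximal subgroups partitioning the non-central elements, and they cannot all be non-normal:
  the conjugates of a non-normal one already cover half of the group. A normal one, \<open>C\<close>, has
  prime index \<open>q\<close>, and square-freeness forces a trivial centre and \<open>|C| = p\<close> prime. Every
  element outside \<open>C\<close> then has order \<open>q\<close>, so \<open>\<psi>(G) = 1 + (p - 1) p + (p q - p) q\<close>, which is
  not divisible by both \<open>\<psi>(C\<^sub>p)\<close> and \<open>\<psi>(C\<^sub>q)\<close>.
\<close>

section \<open>Arithmetic and counting\<close>

lemma dvd_prime_square_cases:
  fixes p d :: nat
  assumes "Factorial_Ring.prime p" "d dvd p ^ 2"
  shows "d = 1 \<or> d = p \<or> d = p ^ 2"
proof -
  obtain i where "i \<le> 2" "d = p ^ i"
    using divides_primepow_nat[OF assms(1)] assms(2) by blast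
  moreover have "i = 0 \<or> i = 1 \<or> i = 2" using \<open>i \<le> 2\<close> by auto
  ultimately show ?thesis by auto
qed

lemma squarefree_mult_imp_coprime:
  fixes a b :: nat
  assumes "squarefree (a * b)"
  shows "coprime a b"
proof (rule ccontr)
  assume "\<not> coprime a b"
  then obtain p :: nat where p: "Factorial_Ring.prime p" "p dvd gcd a b"
    using prime_factor_nat by (metis coprime_iff_gcd_eq_1)
  then have "p ^ 2 dvd a * b" by (simp add: power2_eq_square mult_dvd_mono)
  then have "p dvd 1" using squarefreeD[OF assms] by blast
  then show False using p(1) by simp
qed

lemma multiples_below_eq:
  fixes d e :: nat
  assumes "0 < d" "0 < e"
  shows "{i. i < d * e \<and> d * e dvd i * d} = (\<lambda>j. j * e) ` {..<d}"
proof (intro Set.set_eqI iffI)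
  fix i assume "i \<in> {i. i < d * e \<and> d * e dvd i * d}"
  then have i: "i < d * e" "d * e dvd d * i" by (auto simp: mult.commute)
  then obtain j where "i = j * e" using assms(1) by (auto elim!: dvdE simp: mult.commute)
  then show "i \<in> (\<lambda>j. j * e) ` {..<d}" using i(1) assms by auto
qed (use assms in \<open>auto simp: mult.commute mult.left_commute\<close>)

lemma prime_square_not_dvd_squarefree:
  fixes n p :: nat
  assumes "squarefree n" "Factorial_Ring.prime p"
  shows "\<not> p * p dvd n"
proof
  assume "p * p dvd n"
  then have "p dvd 1" using squarefreeD[OF assms(1)] by (simp add: power2_eq_square)
  then show False using assms(2) by simp
qed

lemma card_eq_mult_card_image:
  assumes "finite A" and "\<And>b. b \<in> f ` A \<Longrightarrow> card {a \<in> A. f a = b} = k"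
  shows "card A = k * card (f ` A)"
proof -
  have "card A = card (\<Union>b\<in>f ` A. {a \<in> A. f a = b})"
    by (rule arg_cong[where f = card]) blast
  also have "\<dots> = (\<Sum>b\<in>f ` A. card {a \<in> A. f a = b})"
    by (rule card_UN_disjoint) (use assms(1) in auto)
  finally show ?thesis using assms(2) by simp
qed

lemma image_eq_self: "(\<And>a. a \<in> A \<Longrightarrow> f a = a) \<Longrightarrow> f ` A = A"
  by force

text \<open>
  For primes \<open>p\<close>, \<open>q\<close> and the cyclic group \<open>C\<^sub>n\<close> of order \<open>n\<close>: \<open>\<psi>(C\<^sub>p) = 1 + (p - 1) p\<close>,
  \<open>\<psi>(C\<^bsub>p\<^sup>2\<^esub>) = 1 + (p - 1) p + (p\<^sup>2 - p) p\<^sup>2\<close>, \<open>\<psi>(C\<^sub>p \<times> C\<^sub>p) = 1 + (p\<^sup>2 - 1) p\<close>, and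
  \<open>1 + (p - 1) p + (p q - p) q\<close> is \<open>\<psi>\<close> of a group of order \<open>p q\<close> with a subgroup \<open>C\<^sub>p\<close> outside
  of which every element has order \<open>q\<close>.
\<close>

lemma psi_prime_not_dvd_psi_cyclic_square:
  fixes p :: nat assumes "2 \<le> p"
  shows "\<not> (1 + (p - 1) * p) dvd (1 + (p - 1) * p + (p * p - p) * (p * p))"
proof
  obtain k where k: "p = Suc k" "1 \<le> k" using assms by (cases p) auto
  define A where "A = 1 + k * (k + 1)"
  assume "(1 + (p - 1) * p) dvd (1 + (p - 1) * p + (p * p - p) * (p * p))"
  then have "A dvd A + k * (k + 1) * ((k + 1) * (k + 1))"
    using k by (simp add: A_def algebra_simps)
  then have "A dvd k * (k + 1) * ((k + 1) * (k + 1))" by (simp add: dvd_add_right_iff)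
  \<comment> \<open>\<open>A + k (k + 1)\<^sup>3 + (k + 1)\<^sup>2 = A (1 + (k + 1)\<^sup>2)\<close> and \<open>(k + 1)\<^sup>2 = A + k\<close>\<close>
  moreover have "A dvd A * (1 + (k + 1) * (k + 1))" by simp
  moreover have "A * (1 + (k + 1) * (k + 1)) = A + k * (k + 1) * ((k + 1) * (k + 1)) + (A + k)"
    by (simp add: A_def algebra_simps)
  ultimately have "A dvd A + k" by (metis dvd_add_right_iff dvd_add_left_iff dvd_refl)
  then have "A dvd k" by (simp add: dvd_add_right_iff)
  moreover have "k < A" using k by (simp add: A_def)
  ultimately show False using k(2) by (simp add: nat_dvd_not_less)
qed

lemma psi_prime_not_dvd_psi_elementary_abelian:
  fixes p :: nat assumes "2 \<le> p"
  shows "\<not> (1 + (p - 1) * p) dvd (1 + (p * p - 1) * p)"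
proof
  obtain k where k: "p = Suc k" "1 \<le> k" using assms by (cases p) auto
  define A where "A = 1 + k * (k + 1)"
  assume "(1 + (p - 1) * p) dvd (1 + (p * p - 1) * p)"
  then have "A dvd (k + 1) * A + k * k" using k by (simp add: A_def algebra_simps)
  then have "A dvd k * k" by (simp add: dvd_add_right_iff)
  moreover have "k * k < A" by (simp add: A_def algebra_simps)
  ultimately show False using k(2) by (simp add: nat_dvd_not_less)
qed

lemma psi_primes_not_both_dvd:
  fixes p q :: nat assumes p: "2 \<le> p" and q: "2 \<le> q"
    and dvd_p: "(1 + (p - 1) * p) dvd (1 + (p - 1) * p + (p * q - p) * q)"
    and dvd_q: "(1 + (q - 1) * q) dvd (1 + (p - 1) * p + (p * q - p) * q)"
  shows False
proof -
  obtain k where k: "p = Suc k" "1 \<le> k" using p by (cases p) auto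
  obtain l where l: "q = Suc l" "1 \<le> l" using q by (cases q) auto
  define A where "A = 1 + k * (k + 1)"
  define B where "B = 1 + l * (l + 1)"
  \<comment> \<open>modulo \<open>A = \<psi>(C\<^sub>p)\<close> the sum is \<open>p (q\<^sup>2 - q)\<close>, modulo \<open>B = \<psi>(C\<^sub>q)\<close> it is \<open>(p - 1)\<^sup>2\<close>\<close>
  have "A dvd A + (k + 1) * (l * (l + 1))"
    using dvd_p k l by (simp add: A_def algebra_simps)
  then have "A dvd (k + 1) * (l * (l + 1))" by (simp add: dvd_add_right_iff)
  moreover have "gcd (k + 1) (k * (k + 1) + 1) = 1"
    using gcd_add_mult[of "k + 1" k 1] by simp
  then have "coprime A (k + 1)"
    by (simp add: A_def coprime_iff_gcd_eq_1 gcd.commute add.commute)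
  ultimately have "A dvd l * (l + 1)" using coprime_dvd_mult_right_iff by blast
  then have "A \<le> l * (l + 1)" using l(2) by (simp add: dvd_imp_le)
  then have "k * (k + 1) < l * (l + 1)" by (simp add: A_def)
  then have "k < l" by (metis add_le_mono1 le_less_linear mult_le_mono not_le)
  have "B dvd k * k + (k + 1) * B"
    using dvd_q k l by (simp add: A_def B_def algebra_simps)
  then have "B dvd k * k" by (simp add: dvd_add_left_iff)
  then have "B \<le> k * k" using k(2) by (simp add: dvd_imp_le)
  then have "l * (l + 1) < k * k" by (simp add: B_def)
  moreover have "k * k \<le> l * (l + 1)" using \<open>k < l\<close> by (intro mult_le_mono) auto
  ultimately show False by simp
qed

section \<open>Element orders in subgroups\<close>

context group
begin

lemma finite_subgroup: "finite (carrier G) \<Longrightarrow> subgroup H G \<Longrightarrow> finite H"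
  using subgroup.subset finite_subset by blast

lemma ord_subgroup:
  assumes "subgroup H G"
  shows "group.ord (G\<lparr>carrier := H\<rparr>) x = ord x"
proof -
  have "x [^]\<^bsub>G\<lparr>carrier := H\<rparr>\<^esub> n = x [^] n" for n :: nat
    by (simp add: nat_pow_def)
  then show ?thesis
    using subgroup_imp_group[OF assms] by (simp add: group.ord_def ord_def)
qed

lemma psi_subgroup:
  assumes "subgroup H G"
  shows "psi (G\<lparr>carrier := H\<rparr>) = (\<Sum>x\<in>H. ord x)"
  using ord_subgroup[OF assms] by (simp add: psi_def)

lemma psi_divisible_subgroups_iff:
  "(\<forall>H. subgroup H G \<longrightarrow> psi_divisible (G\<lparr>carrier := H\<rparr>)) \<longleftrightarrow>
   (\<forall>H K. subgroup H G \<longrightarrow> subgroup K G \<longrightarrow> K \<subseteq> H \<longrightarrow>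
      (\<Sum>x\<in>K. ord x) dvd (\<Sum>x\<in>H. ord x))"
proof -
  have "psi_divisible (G\<lparr>carrier := H\<rparr>) \<longleftrightarrow>
      (\<forall>K. subgroup K G \<longrightarrow> K \<subseteq> H \<longrightarrow> (\<Sum>x\<in>K. ord x) dvd (\<Sum>x\<in>H. ord x))"
    if H: "subgroup H G" for H
  proof -
    have "subgroup K (G\<lparr>carrier := H\<rparr>) \<longleftrightarrow> subgroup K G \<and> K \<subseteq> H" for K
    proof
      assume K: "subgroup K (G\<lparr>carrier := H\<rparr>)"
      show "subgroup K G \<and> K \<subseteq> H"
        using incl_subgroup[OF H K] subgroup.subset[OF K] by simp
    qed (use subgroup_incl[OF _ H] in blast)
    then show ?thesis
      by (auto simp: psi_divisible_def psi_subgroup H)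
  qed
  then show ?thesis by auto
qed

lemma card_subgroup_dvd_order: "subgroup H G \<Longrightarrow> card H dvd order G"
proof -
  assume "subgroup H G"
  then have "order G = card (rcosets H) * card H" using lagrange by simp
  then show ?thesis by simp
qed

lemma card_subgroup_dvd_card_subgroup:
  assumes "subgroup H G" "subgroup K G" "K \<subseteq> H"
  shows "card K dvd card H"
  using group.card_subgroup_dvd_order[OF subgroup_imp_group[OF assms(1)] subgroup_incl[OF assms(2,1,3)]]
  by (simp add: order_def)

lemma ord_dvd_card_subgroup:
  assumes "subgroup H G" "x \<in> H"
  shows "ord x dvd card H"
  using group.ord_dvd_group_order[OF subgroup_imp_group[OF assms(1)], of x] assms
  by (simp add: ord_subgroup[OF assms(1)] order_def)

lemma pow_card_subgroup_eq_one:
  assumes "subgroup H G" "x \<in> H"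
  shows "x [^] card H = \<one>"
  using ord_dvd_card_subgroup[OF assms] pow_eq_id[OF subgroup.mem_carrier[OF assms]] by simp

lemma sum_ord_eq_const:
  assumes "finite S" "\<one> \<in> S" "\<And>x. x \<in> S - {\<one>} \<Longrightarrow> ord x = m"
  shows "(\<Sum>x\<in>S. ord x) = 1 + (card S - 1) * m"
proof -
  have "(\<Sum>x\<in>S. ord x) = ord \<one> + (\<Sum>x\<in>S - {\<one>}. ord x)"
    by (rule sum.remove[OF assms(1,2)])
  also have "(\<Sum>x\<in>S - {\<one>}. ord x) = (\<Sum>x\<in>S - {\<one>}. m)"
    using assms(3) by (rule sum.cong[OF refl])
  also have "\<dots> = (card S - 1) * m"
    using assms(1,2) by (simp add: card_Diff_singleton)
  finally show ?thesis by simp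
qed

lemma ord_eq_prime_card_subgroup:
  assumes "subgroup K G" "Factorial_Ring.prime (card K)" "x \<in> K" "x \<noteq> \<one>"
  shows "ord x = card K"
proof -
  have "ord x \<noteq> 1" using ord_eq_1[OF subgroup.mem_carrier[OF assms(1,3)]] assms(4) by simp
  moreover have "ord x dvd card K" using ord_dvd_card_subgroup[OF assms(1,3)] .
  ultimately show ?thesis using assms(2) by (auto simp: prime_nat_iff)
qed

lemma sum_ord_prime_subgroup:
  assumes "subgroup K G" "Factorial_Ring.prime (card K)"
  shows "(\<Sum>x\<in>K. ord x) = 1 + (card K - 1) * card K"
proof (rule sum_ord_eq_const)
  show "finite K"
  proof (rule ccontr)
    assume "infinite K"
    then show False using assms(2) by simp
  qed
  show "\<one> \<in> K" using assms(1) subgroup.one_closed by blast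
  show "\<And>x. x \<in> K - {\<one>} \<Longrightarrow> ord x = card K"
    using ord_eq_prime_card_subgroup[OF assms] by blast
qed

lemma exists_subgroup_prime_card:
  assumes fin: "finite (carrier G)" and H: "subgroup H G"
    and p: "Factorial_Ring.prime p" and dvd: "p dvd card H"
  shows "\<exists>S. subgroup S G \<and> S \<subseteq> H \<and> card S = p"
proof -
  have "order (G\<lparr>carrier := H\<rparr>) = p ^ 1 * (card H div p)"
    using dvd by (simp add: order_def)
  moreover have "finite (carrier (G\<lparr>carrier := H\<rparr>))"
    using finite_subgroup[OF fin H] by simp
  ultimately obtain S where S: "subgroup S (G\<lparr>carrier := H\<rparr>)" "card S = p ^ 1"
    using sylow_thm[OF p subgroup_imp_group[OF H]] by blast
  then show ?thesis using incl_subgroup[OF H S(1)] subgroup.subset[OF S(1)] by auto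
qed

lemma ord_mult_coprime:
  assumes x: "x \<in> carrier G" and y: "y \<in> carrier G" and comm: "x \<otimes> y = y \<otimes> x"
    and cop: "coprime (ord x) (ord y)"
  shows "ord (x \<otimes> y) = ord x * ord y"
proof -
  define m where "m = ord (x \<otimes> y)"
  have xy: "x \<otimes> y \<in> carrier G" using x y by simp
  have pow: "(x \<otimes> y) [^] n = x [^] n \<otimes> y [^] n" for n :: nat
    by (rule pow_mult_distrib[OF comm x y])
  have "x [^] (m * ord y) = \<one>"
    using pow[of "m * ord y"] pow_eq_id[OF xy, of "m * ord y"] pow_eq_id[OF y, of "m * ord y"] x
    by (simp add: m_def)
  then have dvd_x: "ord x dvd m" using pow_eq_id[OF x] cop by (simp add: coprime_dvd_mult_left_iff)
  have "y [^] (ord x * m) = \<one>"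
    using pow[of "ord x * m"] pow_eq_id[OF xy, of "ord x * m"] pow_eq_id[OF x, of "ord x * m"] y
    by (simp add: m_def)
  moreover have "coprime (ord y) (ord x)" using cop by (simp add: ac_simps)
  ultimately have "ord y dvd m" using pow_eq_id[OF y] by (simp add: coprime_dvd_mult_right_iff)
  with dvd_x have "ord x * ord y dvd m" using cop by (simp add: divides_mult)
  then show ?thesis using ord_mul_divides[OF comm x y] by (simp add: m_def dvd_antisym)
qed

section \<open>Cyclic groups\<close>

lemma subgroup_eq_powers:
  assumes fin: "finite (carrier G)" and K: "subgroup K G" and g: "g \<in> K" "ord g = card K"
  shows "K = (\<lambda>i. g [^] i) ` {..<card K}" and "inj_on (\<lambda>i. g [^] i) {..<card K}"
proof -
  have gc: "g \<in> carrier G" using subgroup.mem_carrier[OF K g(1)] .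
  have "1 \<le> ord g" using ord_ge_1[OF fin gc] .
  then have range: "{..<card K} = {0..ord g - 1}" using g(2) by auto
  have "generate G {g} \<subseteq> K" using generate_subgroup_incl[OF _ K] g(1) by blast
  moreover have "card (generate G {g}) = card K" using generate_pow_card[OF gc] g(2) by simp
  ultimately have "generate G {g} = K"
    using finite_subgroup[OF fin K] by (simp add: card_subset_eq)
  moreover have "generate G {g} = (\<lambda>i. g [^] i) ` {0..ord g - 1}"
    using generate_pow_nat[OF gc] ord_elems_inf_carrier[OF gc] \<open>1 \<le> ord g\<close> by auto
  ultimately show "K = (\<lambda>i. g [^] i) ` {..<card K}" using range by simp
  show "inj_on (\<lambda>i. g [^] i) {..<card K}" using ord_inj[OF gc] range by simp
qed

lemma subgroup_commutes_if_ord_eq_card: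
  assumes "finite (carrier G)" "subgroup K G" "g \<in> K" "ord g = card K" "a \<in> K" "b \<in> K"
  shows "a \<otimes> b = b \<otimes> a"
proof -
  obtain i j :: nat where "a = g [^] i" "b = g [^] j"
    using subgroup_eq_powers(1)[OF assms(1-4)] assms(5,6) by blast
  then show ?thesis
    using subgroup.mem_carrier[OF assms(2,3)] by (simp add: nat_pow_mult add.commute)
qed

lemma cyclic_group_iff_ord_eq_order:
  assumes fin: "finite (carrier G)"
  shows "cyclic_group G \<longleftrightarrow> (\<exists>g\<in>carrier G. ord g = order G)"
proof
  assume "cyclic_group G"
  then obtain x where x: "x \<in> carrier G" "subgroup_generated G {x} = G"
    unfolding cyclic_group_def by blast
  then have "carrier (subgroup_generated G {x}) = carrier G" by simp
  then have "generate G {x} = carrier G" using x(1) by (simp add: carrier_subgroup_generated)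
  then show "\<exists>g\<in>carrier G. ord g = order G"
    using x(1) generate_pow_card[OF x(1)] by (auto simp: order_def)
next
  assume "\<exists>g\<in>carrier G. ord g = order G"
  then obtain g where g: "g \<in> carrier G" "ord g = order G" by blast
  then have "generate G {g} = carrier G"
    using subgroup_eq_powers(1)[OF fin subgroup_self g(1)] generate_pow_card[OF g(1)]
      generate_incl[of "{g}"] fin
    by (simp add: order_def card_subset_eq)
  then have "subgroup_generated G {g} = G" using g(1) by (simp add: subgroup_generated_def)
  then show "cyclic_group G" using g(1) unfolding cyclic_group_def by blast
qed

lemma card_pow_eq_one_cyclic:
  assumes fin: "finite (carrier G)" and g: "g \<in> carrier G" "ord g = order G"
    and d: "d dvd order G"
  shows "card {y \<in> carrier G. y [^] d = \<one>} = d"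
proof -
  define n where "n = order G"
  have g_card: "ord g = card (carrier G)" using g(2) by (simp add: order_def)
  have img: "carrier G = (\<lambda>i. g [^] i) ` {..<n}"
    using subgroup_eq_powers(1)[OF fin subgroup_self g(1) g_card] by (simp add: n_def order_def)
  have inj: "inj_on (\<lambda>i. g [^] i) {..<n}"
    using subgroup_eq_powers(2)[OF fin subgroup_self g(1) g_card] by (simp add: n_def order_def)
  define e where "e = n div d"
  have ne: "n = d * e" using d by (simp add: n_def e_def)
  have "0 < n" using ord_ge_1[OF fin g(1)] g(2) n_def by simp
  then have "0 < d" "0 < e" using ne by (simp_all add: nat_0_less_mult_iff)
  have "(g [^] i) [^] d = \<one> \<longleftrightarrow> n dvd i * d" for i :: nat
    using pow_eq_id[OF g(1), of "i * d"] g(2) by (simp add: n_def nat_pow_pow[OF g(1)])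
  then have "{y \<in> carrier G. y [^] d = \<one>} = (\<lambda>i. g [^] i) ` {i. i < n \<and> n dvd i * d}"
    unfolding img by auto
  also have "{i. i < n \<and> n dvd i * d} = (\<lambda>j. j * e) ` {..<d}"
    using multiples_below_eq[OF \<open>0 < d\<close> \<open>0 < e\<close>] ne by simp
  finally have eq: "{y \<in> carrier G. y [^] d = \<one>} = (\<lambda>i. g [^] i) ` (\<lambda>j. j * e) ` {..<d}" .
  have "(\<lambda>j. j * e) ` {..<d} \<subseteq> {..<n}" using ne \<open>0 < e\<close> by auto
  then have "card ((\<lambda>i. g [^] i) ` (\<lambda>j. j * e) ` {..<d}) = card ((\<lambda>j. j * e) ` {..<d})"
    using card_image inj_on_subset[OF inj] by blast
  also have "\<dots> = d"
    using \<open>0 < e\<close> card_image[of "\<lambda>j. j * e" "{..<d}"] by (simp add: inj_on_def)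
  finally show ?thesis using eq by simp
qed

lemma subgroup_eq_pow_card_eq_one_cyclic:
  assumes fin: "finite (carrier G)" and g: "g \<in> carrier G" "ord g = order G"
    and H: "subgroup H G"
  shows "H = {y \<in> carrier G. y [^] card H = \<one>}"
proof -
  have "H \<subseteq> {y \<in> carrier G. y [^] card H = \<one>}"
    using pow_card_subgroup_eq_one[OF H] subgroup.mem_carrier[OF H] by blast
  moreover have "card {y \<in> carrier G. y [^] card H = \<one>} = card H"
    using card_pow_eq_one_cyclic[OF fin g card_subgroup_dvd_order[OF H]] .
  moreover have "finite {y \<in> carrier G. y [^] card H = \<one>}" using fin by simp
  ultimately show ?thesis by (simp add: card_subset_eq)
qed

lemma pow_eq_pow_imp_eq_if_coprime:
  fixes e e' :: nat
  assumes l: "l \<in> carrier G" "l [^] e' = \<one>" and l': "l' \<in> carrier G" "l' [^] e' = \<one>"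
    and cop: "coprime e e'" and "e \<noteq> 0" and eq: "l [^] e = l' [^] e"
  shows "l = l'"
proof -
  obtain x y where "e * x = e' * y + gcd e e'"
    using bezout_nat[OF \<open>e \<noteq> 0\<close>] by blast
  then have xy: "e * x = Suc (e' * y)" using cop by simp
  have inverse: "(z [^] e) [^] x = z" if "z \<in> carrier G" "z [^] e' = \<one>" for z
  proof -
    have "(z [^] e) [^] x = z [^] Suc (e' * y)" using nat_pow_pow[OF that(1)] xy by simp
    also have "\<dots> = (z [^] e') [^] y \<otimes> z" using nat_pow_pow[OF that(1)] by simp
    finally show ?thesis using that by simp
  qed
  have "l = (l [^] e) [^] x" using inverse[OF l] by simp
  also have "\<dots> = l'" using inverse[OF l'] eq by simp
  finally show ?thesis .
qed

lemma inj_on_mult_coprime_exponents: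
  fixes e e' :: nat
  assumes K: "K \<subseteq> carrier G" "\<And>k. k \<in> K \<Longrightarrow> k [^] e = \<one>"
    and L: "L \<subseteq> carrier G" "\<And>l. l \<in> L \<Longrightarrow> l [^] e' = \<one>"
    and comm: "\<And>k l. k \<in> K \<Longrightarrow> l \<in> L \<Longrightarrow> k \<otimes> l = l \<otimes> k"
    and cop: "coprime e e'" and "e \<noteq> 0"
  shows "inj_on (\<lambda>(k, l). k \<otimes> l) (K \<times> L)"
proof (rule inj_onI, clarify)
  fix k l k' l' assume kl: "k \<in> K" "l \<in> L" "k' \<in> K" "l' \<in> L" and eq: "k \<otimes> l = k' \<otimes> l'"
  then have carrier: "k \<in> carrier G" "l \<in> carrier G" "k' \<in> carrier G" "l' \<in> carrier G"
    using K(1) L(1) by auto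
  have "(k \<otimes> l) [^] e = (k' \<otimes> l') [^] e" using eq by simp
  then have "l [^] e = l' [^] e"
    using kl carrier K(2) by (simp add: pow_mult_distrib[OF comm])
  then have "l = l'"
    using pow_eq_pow_imp_eq_if_coprime[OF carrier(2) L(2) carrier(4) L(2) cop \<open>e \<noteq> 0\<close>] kl
    by simp
  moreover then have "k = k'" using eq carrier by simp
  ultimately show "k = k' \<and> l = l'" by simp
qed

lemma sum_ord_mult_coprime_exponents:
  fixes e e' :: nat
  assumes K: "K \<subseteq> carrier G" "\<And>k. k \<in> K \<Longrightarrow> k [^] e = \<one>"
    and L: "L \<subseteq> carrier G" "\<And>l. l \<in> L \<Longrightarrow> l [^] e' = \<one>"
    and comm: "\<And>k l. k \<in> K \<Longrightarrow> l \<in> L \<Longrightarrow> k \<otimes> l = l \<otimes> k"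
    and cop: "coprime e e'"
  shows "(\<Sum>(k, l)\<in>K \<times> L. ord (k \<otimes> l)) = (\<Sum>x\<in>K. ord x) * (\<Sum>x\<in>L. ord x)"
proof -
  have "ord (k \<otimes> l) = ord k * ord l" if "k \<in> K" "l \<in> L" for k l
  proof -
    have k: "k \<in> carrier G" "ord k dvd e" using that(1) K pow_eq_id by auto
    have l: "l \<in> carrier G" "ord l dvd e'" using that(2) L pow_eq_id by auto
    show ?thesis
      using ord_mult_coprime[OF k(1) l(1) comm[OF that] coprime_divisors[OF k(2) l(2) cop]] .
  qed
  then have "(\<Sum>(k, l)\<in>K \<times> L. ord (k \<otimes> l)) = (\<Sum>(k, l)\<in>K \<times> L. ord k * ord l)"
    by (intro sum.cong) auto
  also have "\<dots> = (\<Sum>x\<in>K. ord x) * (\<Sum>x\<in>L. ord x)"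
    by (simp add: sum_product sum.cartesian_product)
  finally show ?thesis .
qed

text \<open>
  In a cyclic group of square-free order, \<open>H = K L\<close> where \<open>L\<close> consists of the solutions of
  \<open>y\<^bsup>|H|/|K|\<^esup> = 1\<close>, and \<open>|K|\<close> and \<open>|H|/|K|\<close> are coprime.
\<close>

lemma sum_ord_dvd_if_cyclic_squarefree:
  assumes fin: "finite (carrier G)" and cyc: "cyclic_group G" and sqf: "squarefree (order G)"
    and H: "subgroup H G" and K: "subgroup K G" and KH: "K \<subseteq> H"
  shows "(\<Sum>x\<in>K. ord x) dvd (\<Sum>x\<in>H. ord x)"
proof -
  obtain g where g: "g \<in> carrier G" "ord g = order G"
    using cyc cyclic_group_iff_ord_eq_order[OF fin] by blast
  have comm: "a \<otimes> b = b \<otimes> a" if "a \<in> carrier G" "b \<in> carrier G" for a b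
    using subgroup_commutes_if_ord_eq_card[OF fin subgroup_self g(1) _ that] g(2)
    by (simp add: order_def)
  define e where "e = card K"
  define e' where "e' = card H div e"
  define L where "L = {y \<in> carrier G. y [^] e' = \<one>}"
  have H_card: "card H = e * e'"
    using card_subgroup_dvd_card_subgroup[OF H K KH] by (simp add: e_def e'_def)
  have "0 < e" using finite_subgroup[OF fin K] subgroup.one_closed[OF K]
    by (auto simp: e_def card_gt_0_iff)
  have "squarefree (card H)" using squarefree_mono[OF card_subgroup_dvd_order[OF H] sqf] .
  then have cop: "coprime e e'" using H_card squarefree_mult_imp_coprime by simp
  have K_eq: "K = {y \<in> carrier G. y [^] e = \<one>}"
    using subgroup_eq_pow_card_eq_one_cyclic[OF fin g K] by (simp add: e_def)
  have H_eq: "H = {y \<in> carrier G. y [^] (e * e') = \<one>}"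
    using subgroup_eq_pow_card_eq_one_cyclic[OF fin g H] H_card by simp
  have L_card: "card L = e'"
    using card_pow_eq_one_cyclic[OF fin g] card_subgroup_dvd_order[OF H] H_card
    by (simp add: L_def dvd_mult_right)
  have LH: "L \<subseteq> H"
    unfolding L_def H_eq by (auto simp: mult.commute[of e] nat_pow_pow[symmetric])
  have KL: "K \<subseteq> carrier G" "\<And>k. k \<in> K \<Longrightarrow> k [^] e = \<one>"
    "L \<subseteq> carrier G" "\<And>l. l \<in> L \<Longrightarrow> l [^] e' = \<one>"
    using K_eq L_def by auto
  have KL_comm: "k \<otimes> l = l \<otimes> k" if "k \<in> K" "l \<in> L" for k l
    using comm that KL(1,3) by blast
  have inj: "inj_on (\<lambda>(k, l). k \<otimes> l) (K \<times> L)"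
    using inj_on_mult_coprime_exponents[OF KL KL_comm cop] \<open>0 < e\<close> by simp
  have "(\<lambda>(k, l). k \<otimes> l) ` (K \<times> L) \<subseteq> H"
    using KH LH subgroup.m_closed[OF H] by auto
  moreover have "card ((\<lambda>(k, l). k \<otimes> l) ` (K \<times> L)) = card H"
    using card_image[OF inj] L_card H_card by (simp add: e_def card_cartesian_product)
  ultimately have "(\<lambda>(k, l). k \<otimes> l) ` (K \<times> L) = H"
    using finite_subgroup[OF fin H] by (simp add: card_subset_eq)
  then have "(\<Sum>x\<in>H. ord x) = (\<Sum>(k, l)\<in>K \<times> L. ord (k \<otimes> l))"
    using sum.reindex[OF inj, of ord] by (simp add: prod.case_distrib)
  also have "\<dots> = (\<Sum>x\<in>K. ord x) * (\<Sum>x\<in>L. ord x)"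
    by (rule sum_ord_mult_coprime_exponents[OF KL KL_comm cop])
  finally show ?thesis by simp
qed

lemma cyclic_subgroup_iff:
  assumes "finite (carrier G)" "subgroup K G"
  shows "cyclic_group (G\<lparr>carrier := K\<rparr>) \<longleftrightarrow> (\<exists>g\<in>K. ord g = card K)"
  using group.cyclic_group_iff_ord_eq_order[OF subgroup_imp_group[OF assms(2)]]
    finite_subgroup[OF assms] by (simp add: ord_subgroup[OF assms(2)] order_def)

text \<open>An element of maximal order times an element of prime order \<open>r\<close> not dividing that
  maximal order would have larger order.\<close>

lemma cyclic_if_commutative_squarefree:
  assumes fin: "finite (carrier G)" and sqf: "squarefree (order G)"
    and comm: "\<And>a b. a \<in> carrier G \<Longrightarrow> b \<in> carrier G \<Longrightarrow> a \<otimes> b = b \<otimes> a"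
  shows "cyclic_group G"
proof (rule ccontr)
  assume not_cyclic: "\<not> cyclic_group G"
  define m where "m = Max (ord ` carrier G)"
  have fin_ord: "finite (ord ` carrier G)" using fin by simp
  have "m \<in> ord ` carrier G" unfolding m_def using fin_ord one_closed by (intro Max_in) auto
  then obtain x where x: "x \<in> carrier G" "ord x = m" by blast
  obtain k where k: "order G = m * k" using ord_dvd_group_order[OF x(1)] x(2) by (auto elim: dvdE)
  have "m \<noteq> order G" using x not_cyclic cyclic_group_iff_ord_eq_order[OF fin] by blast
  then have "k \<noteq> 1" using k by auto
  then obtain r :: nat where r: "Factorial_Ring.prime r" "r dvd k" using prime_factor_nat by blast
  then have "r dvd card (carrier G)" using k by (simp add: order_def)
  then obtain R where R: "subgroup R G" "card R = r"
    using exists_subgroup_prime_card[OF fin subgroup_self r(1)] by blast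
  have "R \<noteq> {\<one>}"
  proof
    assume "R = {\<one>}"
    then have "r = 1" using R(2) by simp
    then show False using r(1) by simp
  qed
  then obtain y where y: "y \<in> R" "y \<noteq> \<one>" using subgroup.one_closed[OF R(1)] by blast
  have y_carrier: "y \<in> carrier G" using subgroup.mem_carrier[OF R(1) y(1)] .
  have ord_y: "ord y = r" using ord_eq_prime_card_subgroup[OF R(1) _ y] R(2) r(1) by simp
  have "\<not> r dvd m"
  proof
    assume "r dvd m"
    then have "r * r dvd order G" using r(2) k by (simp add: mult_dvd_mono)
    then show False using prime_square_not_dvd_squarefree[OF sqf r(1)] by simp
  qed
  then have "coprime (ord x) (ord y)"
    using prime_imp_coprime[OF r(1)] x(2) ord_y by (simp add: coprime_commute)
  then have "ord (x \<otimes> y) = m * r"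
    using ord_mult_coprime[OF x(1) y_carrier comm[OF x(1) y_carrier]] x(2) ord_y by simp
  moreover have "ord (x \<otimes> y) \<le> m" unfolding m_def
    using fin_ord x(1) y_carrier by (intro Max_ge) auto
  moreover have "0 < m" using ord_ge_1[OF fin x(1)] x(2) by simp
  ultimately show False using prime_ge_2_nat[OF r(1)] by simp
qed

section \<open>Subgroups of order \<open>p\<^sup>2\<close>\<close>

lemma sum_ord_cyclic_prime_square:
  assumes fin: "finite (carrier G)" and P: "subgroup P G" "card P = p ^ 2"
    and p: "Factorial_Ring.prime p" and x: "x \<in> P" "ord x = p ^ 2"
  shows "(\<Sum>y\<in>P. ord y) = 1 + (p - 1) * p + (p * p - p) * (p * p)"
proof -
  interpret P: group "G\<lparr>carrier := P\<rparr>" using subgroup_imp_group[OF P(1)] .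
  have pp: "p * p = p ^ 2" by (simp add: power2_eq_square)
  have finP: "finite P" using finite_subgroup[OF fin P(1)] .
  have ord_P: "ord y = 1 \<or> ord y = p \<or> ord y = p ^ 2" if "y \<in> P" for y
    using dvd_prime_square_cases[OF p] ord_dvd_card_subgroup[OF P(1) that] P(2) by simp
  define T where "T = {y \<in> P. y [^] p = \<one>}"
  have "card {y \<in> carrier (G\<lparr>carrier := P\<rparr>). y [^]\<^bsub>G\<lparr>carrier := P\<rparr>\<^esub> p = \<one>} = p"
    using P.card_pow_eq_one_cyclic[of x p] finP x P(2)
    by (simp add: order_def ord_subgroup[OF P(1)])
  then have T_card: "card T = p" by (simp add: T_def nat_pow_consistent[symmetric])
  have TP: "T \<subseteq> P" unfolding T_def by blast
  have ord_T: "ord y = p" if "y \<in> T - {\<one>}" for y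
  proof -
    have y: "y \<in> carrier G" using that TP subgroup.mem_carrier[OF P(1)] by blast
    have "ord y dvd p" using that pow_eq_id[OF y] by (simp add: T_def)
    moreover have "ord y \<noteq> 1" using that ord_eq_1[OF y] by simp
    ultimately show ?thesis using p unfolding prime_nat_iff by blast
  qed
  have ord_P_T: "ord y = p * p" if "y \<in> P - T" for y
  proof -
    have y: "y \<in> carrier G" using that subgroup.mem_carrier[OF P(1)] by blast
    have "\<not> ord y dvd p" using that pow_eq_id[OF y] by (simp add: T_def)
    then show ?thesis using ord_P[of y] that pp by auto
  qed
  have "(\<Sum>y\<in>T. ord y) = 1 + (p - 1) * p"
    using sum_ord_eq_const[OF finite_subset[OF TP finP] _ ord_T] subgroup.one_closed[OF P(1)] T_card
    by (simp add: T_def)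
  moreover have "(\<Sum>y\<in>P - T. ord y) = (p * p - p) * (p * p)"
    using ord_P_T card_Diff_subset[OF finite_subset[OF TP finP] TP] P(2) T_card pp by simp
  moreover have "(\<Sum>y\<in>P. ord y) = (\<Sum>y\<in>T. ord y) + (\<Sum>y\<in>P - T. ord y)"
    using sum.subset_diff[OF TP finP] by (simp add: add.commute)
  ultimately show ?thesis by simp
qed

lemma sum_ord_elementary_prime_square:
  assumes fin: "finite (carrier G)" and P: "subgroup P G" "card P = p ^ 2"
    and p: "Factorial_Ring.prime p" and no_gen: "\<And>x. x \<in> P \<Longrightarrow> ord x \<noteq> p ^ 2"
  shows "(\<Sum>y\<in>P. ord y) = 1 + (p * p - 1) * p"
proof -
  have "ord y = p" if "y \<in> P - {\<one>}" for y
  proof -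
    have y: "y \<in> carrier G" using that subgroup.mem_carrier[OF P(1)] by blast
    have "ord y dvd p ^ 2" using ord_dvd_card_subgroup[OF P(1)] that P(2) by simp
    then have "ord y = 1 \<or> ord y = p \<or> ord y = p ^ 2" by (rule dvd_prime_square_cases[OF p])
    moreover have "ord y \<noteq> 1" using that ord_eq_1[OF y] by simp
    moreover have "ord y \<noteq> p ^ 2" using that no_gen by simp
    ultimately show ?thesis by simp
  qed
  then show ?thesis
    using sum_ord_eq_const[OF finite_subgroup[OF fin P(1)] subgroup.one_closed[OF P(1)]] P(2)
    by (simp add: power2_eq_square)
qed

lemma squarefree_order_if_sum_ord_dvd:
  assumes fin: "finite (carrier G)"
    and dvd: "\<And>H K. subgroup H G \<Longrightarrow> subgroup K G \<Longrightarrow> K \<subseteq> H \<Longrightarrow>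
      (\<Sum>x\<in>K. ord x) dvd (\<Sum>x\<in>H. ord x)"
  shows "squarefree (order G)"
proof -
  have "order G \<noteq> 0" using fin by (auto simp: order_def)
  then show ?thesis unfolding squarefree_factorial_semiring[OF \<open>order G \<noteq> 0\<close>]
  proof (intro allI impI notI)
    fix p :: nat assume p: "Factorial_Ring.prime p" and "p ^ 2 dvd order G"
    then have "order G = p ^ 2 * (order G div p ^ 2)" by simp
    then obtain P where P: "subgroup P G" "card P = p ^ 2"
      using sylow_thm[OF p is_group _ fin] by blast
    obtain K where K: "subgroup K G" "K \<subseteq> P" "card K = p"
      using exists_subgroup_prime_card[OF fin P(1) p] P(2) by (auto simp: power2_eq_square)
    have psi_K_dvd: "(1 + (p - 1) * p) dvd (\<Sum>x\<in>P. ord x)"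
      using dvd[OF P(1) K(1,2)] sum_ord_prime_subgroup[OF K(1)] K(3) p by simp
    have "2 \<le> p" using prime_ge_2_nat[OF p] .
    show False
    proof (cases "\<exists>x\<in>P. ord x = p ^ 2")
      case True
      then obtain x where "x \<in> P" "ord x = p ^ 2" by blast
      with psi_K_dvd show False
        using sum_ord_cyclic_prime_square[OF fin P p] psi_prime_not_dvd_psi_cyclic_square[OF \<open>2 \<le> p\<close>]
        by simp
    next
      case False
      with psi_K_dvd show False
        using sum_ord_elementary_prime_square[OF fin P p]
          psi_prime_not_dvd_psi_elementary_abelian[OF \<open>2 \<le> p\<close>]
        by auto
    qed
  qed
qed

end

section \<open>Conjugation, centre and centralisers\<close>

definition conjugate :: "('a, 'b) monoid_scheme \<Rightarrow> 'a \<Rightarrow> 'a \<Rightarrow> 'a" where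
  "conjugate G g a = g \<otimes>\<^bsub>G\<^esub> a \<otimes>\<^bsub>G\<^esub> inv\<^bsub>G\<^esub> g"

definition center :: "('a, 'b) monoid_scheme \<Rightarrow> 'a set" where
  "center G = {z \<in> carrier G. \<forall>g\<in>carrier G. z \<otimes>\<^bsub>G\<^esub> g = g \<otimes>\<^bsub>G\<^esub> z}"

definition centralizer :: "('a, 'b) monoid_scheme \<Rightarrow> 'a \<Rightarrow> 'a set" where
  "centralizer G x = {g \<in> carrier G. g \<otimes>\<^bsub>G\<^esub> x = x \<otimes>\<^bsub>G\<^esub> g}"

context group
begin

lemma inv_mult_cancel_left [simp]:
  "k \<in> carrier G \<Longrightarrow> x \<in> carrier G \<Longrightarrow> inv k \<otimes> (k \<otimes> x) = x"
  by (simp flip: m_assoc)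

lemma mult_inv_cancel_left [simp]:
  "k \<in> carrier G \<Longrightarrow> x \<in> carrier G \<Longrightarrow> k \<otimes> (inv k \<otimes> x) = x"
  by (simp flip: m_assoc)

lemma conjugate_closed [simp]:
  "k \<in> carrier G \<Longrightarrow> a \<in> carrier G \<Longrightarrow> conjugate G k a \<in> carrier G"
  by (simp add: conjugate_def)

lemma conjugate_mult:
  "k \<in> carrier G \<Longrightarrow> a \<in> carrier G \<Longrightarrow> b \<in> carrier G \<Longrightarrow>
    conjugate G k (a \<otimes> b) = conjugate G k a \<otimes> conjugate G k b"
  by (simp add: conjugate_def m_assoc)

lemma conjugate_conjugate:
  "k \<in> carrier G \<Longrightarrow> l \<in> carrier G \<Longrightarrow> a \<in> carrier G \<Longrightarrow>
    conjugate G k (conjugate G l a) = conjugate G (k \<otimes> l) a"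
  by (simp add: conjugate_def m_assoc inv_mult_group)

lemma conjugate_inv_conjugate [simp]:
  "k \<in> carrier G \<Longrightarrow> a \<in> carrier G \<Longrightarrow> conjugate G (inv k) (conjugate G k a) = a"
  by (simp add: conjugate_def m_assoc)

lemma conjugate_one [simp]: "a \<in> carrier G \<Longrightarrow> conjugate G \<one> a = a"
  by (simp add: conjugate_def)

lemma conjugate_eq_if_commute:
  assumes "k \<in> carrier G" "a \<in> carrier G" "a \<otimes> k = k \<otimes> a"
  shows "conjugate G k a = a"
proof -
  have "conjugate G k a = (a \<otimes> k) \<otimes> inv k"
    using assms(3) by (simp add: conjugate_def)
  also have "\<dots> = a" using assms(1,2) by (simp add: m_assoc)
  finally show ?thesis .
qed

lemma conjugate_pow:
  "k \<in> carrier G \<Longrightarrow> a \<in> carrier G \<Longrightarrow> conjugate G k (a [^] (n::nat)) = conjugate G k a [^] n"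
  by (induction n) (simp_all add: conjugate_mult, simp add: conjugate_def)

lemma commute_inv:
  assumes "a \<in> carrier G" "b \<in> carrier G" "a \<otimes> b = b \<otimes> a"
  shows "inv a \<otimes> b = b \<otimes> inv a"
proof -
  have "inv a \<otimes> b = inv a \<otimes> (b \<otimes> a) \<otimes> inv a"
    using assms(1,2) by (simp add: m_assoc)
  also have "\<dots> = inv a \<otimes> (a \<otimes> b) \<otimes> inv a" using assms(3) by simp
  also have "\<dots> = b \<otimes> inv a" using assms(1,2) by (simp add: m_assoc)
  finally show ?thesis .
qed

lemma subgroup_center: "subgroup (center G) G"
proof (rule subgroupI)
  show "center G \<subseteq> carrier G" unfolding center_def by blast
  show "center G \<noteq> {}" unfolding center_def using one_closed by force
  fix a b assume a: "a \<in> center G" and b: "b \<in> center G"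
  show "inv a \<in> center G" using a commute_inv unfolding center_def by simp
  have ab: "a \<in> carrier G" "b \<in> carrier G" using a b unfolding center_def by auto
  have "a \<otimes> b \<otimes> g = g \<otimes> (a \<otimes> b)" if g: "g \<in> carrier G" for g
  proof -
    have "a \<otimes> b \<otimes> g = a \<otimes> (g \<otimes> b)"
      using ab g b by (simp add: m_assoc center_def)
    also have "\<dots> = (a \<otimes> g) \<otimes> b" using ab g by (simp add: m_assoc)
    also have "\<dots> = (g \<otimes> a) \<otimes> b" using a g unfolding center_def by simp
    finally show ?thesis using ab g by (simp add: m_assoc)
  qed
  then show "a \<otimes> b \<in> center G" using ab unfolding center_def by simp
qed

lemma subgroup_centralizer:
  assumes x: "x \<in> carrier G"
  shows "subgroup (centralizer G x) G"
proof (rule subgroupI)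
  show "centralizer G x \<subseteq> carrier G" unfolding centralizer_def by blast
  show "centralizer G x \<noteq> {}" unfolding centralizer_def using one_closed x by force
  fix a b assume a: "a \<in> centralizer G x" and b: "b \<in> centralizer G x"
  show "inv a \<in> centralizer G x" using a commute_inv x unfolding centralizer_def by auto
  have ab: "a \<in> carrier G" "b \<in> carrier G" using a b unfolding centralizer_def by auto
  have "a \<otimes> b \<otimes> x = a \<otimes> (x \<otimes> b)"
    using ab x b by (simp add: m_assoc centralizer_def)
  also have "\<dots> = (a \<otimes> x) \<otimes> b" using ab x by (simp add: m_assoc)
  also have "\<dots> = (x \<otimes> a) \<otimes> b" using a unfolding centralizer_def by simp
  also have "\<dots> = x \<otimes> (a \<otimes> b)" using ab x by (simp add: m_assoc)
  finally show "a \<otimes> b \<in> centralizer G x" using ab unfolding centralizer_def by simp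
qed

lemma centralizer_subset_carrier: "centralizer G x \<subseteq> carrier G"
  by (auto simp: centralizer_def)

lemma mem_centralizer_self: "x \<in> carrier G \<Longrightarrow> x \<in> centralizer G x"
  by (simp add: centralizer_def)

lemma center_subset_centralizer: "x \<in> carrier G \<Longrightarrow> center G \<subseteq> centralizer G x"
  by (auto simp: center_def centralizer_def)

lemma centralizer_neq_carrier:
  assumes "x \<in> carrier G" "x \<notin> center G"
  shows "centralizer G x \<noteq> carrier G"
proof
  assume eq: "centralizer G x = carrier G"
  obtain g where g: "g \<in> carrier G" "x \<otimes> g \<noteq> g \<otimes> x"
    using assms by (auto simp: center_def)
  then have "g \<in> centralizer G x" using eq by simp
  then have "g \<otimes> x = x \<otimes> g" by (simp add: centralizer_def)
  with g(2) show False by simp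
qed

lemma conjugate_center: "k \<in> carrier G \<Longrightarrow> z \<in> center G \<Longrightarrow> conjugate G k z = z"
  by (simp add: center_def conjugate_eq_if_commute)

lemma conjugate_notin_center:
  assumes "k \<in> carrier G" "x \<in> carrier G" "x \<notin> center G"
  shows "conjugate G k x \<notin> center G"
  using conjugate_center[of "inv k" "conjugate G k x"] assms by auto

lemma centralizer_conjugate:
  assumes k: "k \<in> carrier G" and x: "x \<in> carrier G"
  shows "centralizer G (conjugate G k x) = conjugate G k ` centralizer G x"
proof
  show "conjugate G k ` centralizer G x \<subseteq> centralizer G (conjugate G k x)"
  proof
    fix b assume "b \<in> conjugate G k ` centralizer G x"
    then obtain a where a: "a \<in> centralizer G x" "b = conjugate G k a" by blast
    have ac: "a \<in> carrier G" using a by (simp add: centralizer_def)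
    have "conjugate G k a \<otimes> conjugate G k x = conjugate G k (a \<otimes> x)"
      using k ac x by (simp add: conjugate_mult)
    also have "\<dots> = conjugate G k (x \<otimes> a)" using a by (simp add: centralizer_def)
    also have "\<dots> = conjugate G k x \<otimes> conjugate G k a"
      using k ac x by (simp add: conjugate_mult)
    finally show "b \<in> centralizer G (conjugate G k x)"
      using a k ac by (simp add: centralizer_def)
  qed
  show "centralizer G (conjugate G k x) \<subseteq> conjugate G k ` centralizer G x"
  proof
    fix b assume b: "b \<in> centralizer G (conjugate G k x)"
    have bc: "b \<in> carrier G" using b by (simp add: centralizer_def)
    define a where "a = conjugate G (inv k) b"
    have ac: "a \<in> carrier G" using k bc by (simp add: a_def)
    have ik: "inv k \<in> carrier G" using k by simp
    have "a \<otimes> x = conjugate G (inv k) b \<otimes> conjugate G (inv k) (conjugate G k x)"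
      using k x by (simp add: a_def)
    also have "\<dots> = conjugate G (inv k) (b \<otimes> conjugate G k x)"
      using conjugate_mult[OF ik bc] k x by simp
    also have "\<dots> = conjugate G (inv k) (conjugate G k x \<otimes> b)"
      using b by (simp add: centralizer_def)
    also have "\<dots> = x \<otimes> a"
      using conjugate_mult[OF ik _ bc] k x by (simp add: a_def)
    finally have "a \<in> centralizer G x" using ac by (simp add: centralizer_def)
    moreover have "b = conjugate G k a"
      using k bc by (simp add: a_def conjugate_conjugate)
    ultimately show "b \<in> conjugate G k ` centralizer G x" by blast
  qed
qed

lemma subgroup_conjugation_stabilizer:
  assumes S: "S \<subseteq> carrier G"
  shows "subgroup {k \<in> carrier G. conjugate G k ` S = S} G" (is "subgroup ?N G")
proof (rule subgroupI)
  show "?N \<subseteq> carrier G" by blast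
  have "conjugate G \<one> ` S = S" by (rule image_eq_self) (use S in auto)
  then show "?N \<noteq> {}" by force
  fix a b assume a: "a \<in> ?N" and b: "b \<in> ?N"
  have "conjugate G (inv a) ` S = conjugate G (inv a) ` conjugate G a ` S" using a by simp
  also have "\<dots> = (\<lambda>y. conjugate G (inv a) (conjugate G a y)) ` S"
    by (simp add: image_image)
  also have "\<dots> = S" by (rule image_eq_self) (use a S in auto)
  finally show "inv a \<in> ?N" using a by simp
  have "conjugate G (a \<otimes> b) ` S = (\<lambda>y. conjugate G a (conjugate G b y)) ` S"
    by (rule image_cong[OF refl]) (use a b S in \<open>auto simp: conjugate_conjugate\<close>)
  also have "\<dots> = S" using a b by (simp flip: image_image)
  finally show "a \<otimes> b \<in> ?N" using a b by simp
qed

lemma normal_if_conjugation_stable: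
  assumes "subgroup S G" "\<And>g. g \<in> carrier G \<Longrightarrow> conjugate G g ` S = S"
  shows "S \<lhd> G"
  unfolding normal_inv_iff
proof (intro conjI ballI)
  fix g h assume "g \<in> carrier G" "h \<in> S"
  then have "conjugate G g h \<in> S" using assms(2) by blast
  then show "g \<otimes> h \<otimes> inv g \<in> S" by (simp add: conjugate_def)
qed (rule assms(1))

lemma two_card_center_le_card_centralizer:
  assumes fin: "finite (carrier G)" and x: "x \<in> carrier G" "x \<notin> center G"
  shows "2 * card (center G) \<le> card (centralizer G x)"
proof -
  have Z_C: "center G \<subseteq> centralizer G x" using center_subset_centralizer[OF x(1)] .
  obtain t where t: "card (centralizer G x) = card (center G) * t"
    using card_subgroup_dvd_card_subgroup[OF subgroup_centralizer[OF x(1)] subgroup_center Z_C]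
    by blast
  have "card (centralizer G x) \<noteq> card (center G)"
    using card_subset_eq[OF finite_subgroup[OF fin subgroup_centralizer[OF x(1)]] Z_C]
      mem_centralizer_self[OF x(1)] x(2) by auto
  moreover have "card (centralizer G x) \<noteq> 0"
    using finite_subgroup[OF fin subgroup_centralizer[OF x(1)]] mem_centralizer_self[OF x(1)]
    by auto
  ultimately have "2 \<le> t" using t by (cases t) auto
  then show ?thesis using t by simp
qed

lemma normal_set_mult_subgroup: "N \<lhd> G \<Longrightarrow> subgroup S G \<Longrightarrow> subgroup (N <#> S) G"
  using second_isomorphism_grp.normal_set_mult_subgroup[of N G S]
  unfolding second_isomorphism_grp_def second_isomorphism_grp_axioms_def by blast

lemma subset_set_mult_left: "subgroup S G \<Longrightarrow> N \<subseteq> carrier G \<Longrightarrow> N \<subseteq> N <#> S"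
  unfolding set_mult_def using subgroup.one_closed by force

lemma subset_set_mult_right: "subgroup N G \<Longrightarrow> S \<subseteq> carrier G \<Longrightarrow> S \<subseteq> N <#> S"
  unfolding set_mult_def using subgroup.one_closed by force

lemma card_set_mult_le: "finite N \<Longrightarrow> finite S \<Longrightarrow> card (N <#> S) \<le> card N * card S"
proof -
  assume "finite N" "finite S"
  moreover have "N <#> S = (\<lambda>(a, b). a \<otimes> b) ` (N \<times> S)" unfolding set_mult_def
    by auto
  ultimately show ?thesis
    using card_image_le[of "N \<times> S"] by (simp add: card_cartesian_product)
qed

text \<open>The pairs \<open>(h, k)\<close> with product \<open>h\<^sub>0 k\<^sub>0\<close> are exactly \<open>(h\<^sub>0 d, d\<inverse> k\<^sub>0)\<close>, \<open>d \<in> H \<inter> K\<close>.\<close>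

lemma card_set_mult_mult_card_inter:
  assumes fin: "finite (carrier G)" and H: "subgroup H G" and K: "subgroup K G"
  shows "card (H <#> K) * card (H \<inter> K) = card H * card K"
proof -
  define f where "f = (\<lambda>(a, b). a \<otimes> b)"
  have img: "f ` (H \<times> K) = H <#> K" unfolding set_mult_def f_def by auto
  have Hc: "\<And>x. x \<in> H \<Longrightarrow> x \<in> carrier G"
    using subgroup.mem_carrier[OF H] .
  have Kc: "\<And>x. x \<in> K \<Longrightarrow> x \<in> carrier G"
    using subgroup.mem_carrier[OF K] .
  have "card (H \<times> K) = card (H \<inter> K) * card (f ` (H \<times> K))"
  proof (rule card_eq_mult_card_image)
    show "finite (H \<times> K)" using finite_subgroup[OF fin H] finite_subgroup[OF fin K] by simp
    fix v assume "v \<in> f ` (H \<times> K)"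
    then obtain h k where hk: "h \<in> H" "k \<in> K" "v = h \<otimes> k" unfolding f_def by auto
    have hc: "h \<in> carrier G" and kc: "k \<in> carrier G" using hk Hc Kc by auto
    define g where "g = (\<lambda>d. (h \<otimes> d, inv d \<otimes> k))"
    have "{a \<in> H \<times> K. f a = v} = g ` (H \<inter> K)"
    proof (intro Set.set_eqI iffI)
      fix a assume "a \<in> {a \<in> H \<times> K. f a = v}"
      then obtain h' k' where a: "a = (h', k')" "h' \<in> H" "k' \<in> K" "h' \<otimes> k' = h \<otimes> k"
        using hk unfolding f_def by auto
      have h'c: "h' \<in> carrier G" and k'c: "k' \<in> carrier G" using a Hc Kc by auto
      define d where "d = inv h \<otimes> h'"
      have dH: "d \<in> H"
        unfolding d_def using subgroup.m_closed[OF H] subgroup.m_inv_closed[OF H] hk a by blast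
      have "d = inv h \<otimes> (h' \<otimes> k') \<otimes> inv k'" unfolding d_def
        using hc h'c k'c by (simp add: m_assoc)
      also have "\<dots> = k \<otimes> inv k'" using a(4) hc kc k'c by (simp add: m_assoc)
      finally have dk: "d = k \<otimes> inv k'" .
      have dK: "d \<in> K"
        unfolding dk using subgroup.m_closed[OF K] subgroup.m_inv_closed[OF K] hk a by blast
      have "h \<otimes> d = h'" unfolding d_def using hc h'c by simp
      moreover have "inv d \<otimes> k = k'" unfolding dk
        using kc k'c by (simp add: inv_mult_group m_assoc)
      ultimately show "a \<in> g ` (H \<inter> K)" using a(1) dH dK g_def by auto
    next
      fix a assume "a \<in> g ` (H \<inter> K)"
      then obtain d where d: "d \<in> H" "d \<in> K" "a = (h \<otimes> d, inv d \<otimes> k)" unfolding g_def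
        by auto
      have dc: "d \<in> carrier G" using d Hc by auto
      have "h \<otimes> d \<in> H" using subgroup.m_closed[OF H] hk d by blast
      moreover have "inv d \<otimes> k \<in> K"
        using subgroup.m_closed[OF K] subgroup.m_inv_closed[OF K] hk d by blast
      moreover have "(h \<otimes> d) \<otimes> (inv d \<otimes> k) = h \<otimes> k"
        using hc kc dc by (simp add: m_assoc)
      ultimately show "a \<in> {a \<in> H \<times> K. f a = v}" using d hk unfolding f_def by simp
    qed
    moreover have "inj_on g (H \<inter> K)"
      using hc Hc by (auto intro!: inj_onI simp: g_def)
    ultimately show "card {a \<in> H \<times> K. f a = v} = card (H \<inter> K)"
      by (simp add: card_image)
  qed
  then show ?thesis using img by (simp add: card_cartesian_product mult.commute)
qed

end

section \<open>Groups whose proper subgroups are abelian\<close>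

locale proper_subgroups_abelian = group +
  assumes finite_carrier: "finite (carrier G)"
    and proper_subgroup_commute: "\<And>K a b. subgroup K G \<Longrightarrow> K \<noteq> carrier G \<Longrightarrow>
      a \<in> K \<Longrightarrow> b \<in> K \<Longrightarrow> a \<otimes> b = b \<otimes> a"
begin

lemma centralizer_commute:
  "x \<in> carrier G \<Longrightarrow> x \<notin> center G \<Longrightarrow> a \<in> centralizer G x \<Longrightarrow> b \<in> centralizer G x \<Longrightarrow>
    a \<otimes> b = b \<otimes> a"
  using proper_subgroup_commute[OF subgroup_centralizer centralizer_neq_carrier] by blast

lemma centralizer_eq:
  assumes x: "x \<in> carrier G" "x \<notin> center G" and y: "y \<in> centralizer G x" "y \<notin> center G"
  shows "centralizer G y = centralizer G x"
proof
  have yc: "y \<in> carrier G" using y unfolding centralizer_def by simp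
  show "centralizer G x \<subseteq> centralizer G y"
  proof
    fix a assume a: "a \<in> centralizer G x"
    then have "a \<otimes> y = y \<otimes> a" using centralizer_commute[OF x a y(1)] by simp
    then show "a \<in> centralizer G y" using a unfolding centralizer_def by simp
  qed
  show "centralizer G y \<subseteq> centralizer G x"
  proof
    fix a assume a: "a \<in> centralizer G y"
    have "x \<in> centralizer G y" using y(1) x unfolding centralizer_def by simp
    then have "a \<otimes> x = x \<otimes> a" using centralizer_commute[OF yc y(2) a] by simp
    then show "a \<in> centralizer G x" using a unfolding centralizer_def by simp
  qed
qed

lemma centralizer_maximal:
  assumes x: "x \<in> carrier G" "x \<notin> center G"
    and K: "subgroup K G" "centralizer G x \<subseteq> K" "K \<noteq> carrier G"
  shows "K = centralizer G x"
proof
  show "K \<subseteq> centralizer G x"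
  proof
    fix a assume a: "a \<in> K"
    have "x \<in> K" using K(2) mem_centralizer_self[OF x(1)] by blast
    then have "a \<otimes> x = x \<otimes> a" using proper_subgroup_commute[OF K(1) K(3) a] by simp
    then show "a \<in> centralizer G x"
      using a subgroup.mem_carrier[OF K(1)] unfolding centralizer_def by simp
  qed
qed (use K in simp)

lemma normal_set_mult_commute:
  assumes "P \<lhd> G" "subgroup Q G" "P <#> Q \<noteq> carrier G" "u \<in> P" "t \<in> Q"
  shows "t \<otimes> u = u \<otimes> t"
proof -
  have "t \<in> P <#> Q"
    using subset_set_mult_right[OF normal_imp_subgroup[OF assms(1)] subgroup.subset[OF assms(2)]] assms(5)
    by blast
  moreover have "u \<in> P <#> Q"
    using subset_set_mult_left[OF assms(2) subgroup.subset[OF normal_imp_subgroup[OF assms(1)]]] assms(4)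
    by blast
  ultimately show ?thesis
    using proper_subgroup_commute[OF normal_set_mult_subgroup[OF assms(1,2)] assms(3)] by blast
qed

definition noncentral_conjugates :: "'a \<Rightarrow> 'a set" where
  "noncentral_conjugates x =
    (\<lambda>(g, y). conjugate G g y) ` (carrier G \<times> (centralizer G x - center G))"

lemma mem_centralizer_if_normalizes:
  assumes x: "x \<in> carrier G" "x \<notin> center G" and not_normal: "\<not> centralizer G x \<lhd> G"
    and k: "k \<in> carrier G" and eq: "conjugate G k ` centralizer G x = centralizer G x"
  shows "k \<in> centralizer G x"
proof -
  define N where "N = {k \<in> carrier G. conjugate G k ` centralizer G x = centralizer G x}"
  have N: "subgroup N G"
    unfolding N_def by (rule subgroup_conjugation_stabilizer[OF centralizer_subset_carrier])
  have "conjugate G l ` centralizer G x = centralizer G x" if l: "l \<in> centralizer G x" for l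
  proof (rule image_eq_self)
    fix a assume "a \<in> centralizer G x"
    then show "conjugate G l a = a"
      using conjugate_eq_if_commute centralizer_commute[OF x _ l] centralizer_subset_carrier l
      by blast
  qed
  then have "centralizer G x \<subseteq> N" using centralizer_subset_carrier by (auto simp: N_def)
  moreover have "N \<noteq> carrier G"
  proof
    assume "N = carrier G"
    then have "conjugate G g ` centralizer G x = centralizer G x" if "g \<in> carrier G" for g
      using that unfolding N_def by blast
    then show False
      using normal_if_conjugation_stable[OF subgroup_centralizer[OF x(1)]] not_normal by blast
  qed
  ultimately have "N = centralizer G x" using centralizer_maximal[OF x N] by simp
  then show ?thesis using k eq by (auto simp: N_def)
qed

lemma noncentral_conjugates_subset: "noncentral_conjugates x \<subseteq> carrier G - center G"
proof
  fix v assume "v \<in> noncentral_conjugates x"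
  then obtain g y where "g \<in> carrier G" "y \<in> centralizer G x" "y \<notin> center G" "v = conjugate G g y"
    unfolding noncentral_conjugates_def by auto
  moreover have "y \<in> carrier G" using \<open>y \<in> centralizer G x\<close> centralizer_subset_carrier by blast
  ultimately show "v \<in> carrier G - center G" using conjugate_notin_center by simp
qed

lemma conjugate_eq_in_centralizer:
  assumes x: "x \<in> carrier G" "x \<notin> center G" and not_normal: "\<not> centralizer G x \<lhd> G"
    and k: "k \<in> carrier G" and w: "w \<in> centralizer G x" "w \<notin> center G"
    and y: "y \<in> centralizer G x" "y \<notin> center G" and eq: "conjugate G k w = y"
  shows "k \<in> centralizer G x" and "w = y"
proof -
  have w_carrier: "w \<in> carrier G" using w(1) centralizer_subset_carrier by blast
  have "conjugate G k ` centralizer G x = centralizer G x"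
    using centralizer_conjugate[OF k w_carrier] centralizer_eq[OF x w] centralizer_eq[OF x y] eq
    by simp
  then show kC: "k \<in> centralizer G x"
    using mem_centralizer_if_normalizes[OF x not_normal k] by simp
  then have "w \<otimes> k = k \<otimes> w" using centralizer_commute[OF x w(1)] by blast
  then show "w = y" using conjugate_eq_if_commute[OF k w_carrier] eq by simp
qed

lemma card_noncentral_conjugates:
  assumes x: "x \<in> carrier G" "x \<notin> center G" and not_normal: "\<not> centralizer G x \<lhd> G"
  shows "order G * card (centralizer G x - center G) =
    card (centralizer G x) * card (noncentral_conjugates x)"
proof -
  define C where "C = centralizer G x"
  define f where "f = (\<lambda>(g, y). conjugate G g y)"
  have C_carrier: "\<And>a. a \<in> C \<Longrightarrow> a \<in> carrier G"
    using centralizer_subset_carrier C_def by blast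
  have "card (carrier G \<times> (C - center G)) = card C * card (f ` (carrier G \<times> (C - center G)))"
  proof (rule card_eq_mult_card_image)
    show "finite (carrier G \<times> (C - center G))"
      using finite_carrier finite_subgroup[OF finite_carrier subgroup_centralizer[OF x(1)]] C_def
      by simp
    fix v assume "v \<in> f ` (carrier G \<times> (C - center G))"
    then obtain g y where gy: "g \<in> carrier G" "y \<in> C" "y \<notin> center G" "v = conjugate G g y"
      unfolding f_def by auto
    have y_carrier: "y \<in> carrier G" using gy C_carrier by simp
    define h where "h = (\<lambda>k. (g \<otimes> k, y))"
    have "{a \<in> carrier G \<times> (C - center G). f a = v} = h ` C"
    proof (intro Set.set_eqI iffI)
      fix a assume "a \<in> {a \<in> carrier G \<times> (C - center G). f a = v}"
      then obtain g' w where a: "a = (g', w)" "g' \<in> carrier G" "w \<in> C" "w \<notin> center G"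
          "conjugate G g' w = conjugate G g y"
        using gy unfolding f_def by auto
      define k where "k = inv g \<otimes> g'"
      have k: "k \<in> carrier G" "g \<otimes> k = g'"
        using gy a by (simp_all add: k_def flip: m_assoc)
      have "conjugate G k w = y"
        using a(2,3,5) gy(1) y_carrier C_carrier by (simp add: k_def flip: conjugate_conjugate)
      then have "k \<in> C" "w = y"
        using conjugate_eq_in_centralizer[OF x not_normal k(1)] a(3,4) gy(2,3) C_def by auto
      then show "a \<in> h ` C" using a(1) k(2) h_def by auto
    next
      fix a assume "a \<in> h ` C"
      then obtain k where k: "k \<in> C" "a = (g \<otimes> k, y)" using h_def by auto
      have "y \<otimes> k = k \<otimes> y" using centralizer_commute[OF x] gy(2) k(1) C_def by blast
      then have "conjugate G k y = y"
        using conjugate_eq_if_commute C_carrier[OF k(1)] y_carrier by blast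
      then have "conjugate G (g \<otimes> k) y = conjugate G g y"
        using conjugate_conjugate[OF gy(1) C_carrier[OF k(1)] y_carrier] by simp
      then show "a \<in> {a \<in> carrier G \<times> (C - center G). f a = v}"
        using k gy C_carrier unfolding f_def by simp
    qed
    moreover have "inj_on h C" using gy C_carrier by (auto intro: inj_onI simp: h_def)
    ultimately show "card {a \<in> carrier G \<times> (C - center G). f a = v} = card C"
      by (simp add: card_image)
  qed
  then show ?thesis
    unfolding noncentral_conjugates_def f_def C_def by (simp add: card_cartesian_product order_def)
qed

lemma noncentral_conjugates_disjoint:
  assumes x0: "x0 \<in> carrier G" "x0 \<notin> center G"
    and x1: "x1 \<in> carrier G" "x1 \<notin> center G" "x1 \<notin> noncentral_conjugates x0"
  shows "noncentral_conjugates x0 \<inter> noncentral_conjugates x1 = {}"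
proof (rule ccontr)
  assume "noncentral_conjugates x0 \<inter> noncentral_conjugates x1 \<noteq> {}"
  then obtain g y h w
    where gy: "g \<in> carrier G" "y \<in> centralizer G x0" "y \<notin> center G"
      and hw: "h \<in> carrier G" "w \<in> centralizer G x1" "w \<notin> center G"
      and eq: "conjugate G g y = conjugate G h w"
    unfolding noncentral_conjugates_def by auto
  have yc: "y \<in> carrier G" and wc: "w \<in> carrier G"
    using gy hw centralizer_subset_carrier by auto
  define k where "k = inv h \<otimes> g"
  have kc: "k \<in> carrier G" unfolding k_def using gy hw by simp
  have "w = conjugate G (inv h) (conjugate G g y)" using eq hw wc by simp
  also have "\<dots> = conjugate G k y" unfolding k_def using gy hw yc conjugate_conjugate by simp
  finally have wk: "w = conjugate G k y" .
  have "centralizer G x1 = centralizer G w" using centralizer_eq[OF x1(1,2) hw(2,3)] by simp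
  also have "\<dots> = conjugate G k ` centralizer G y"
    using wk centralizer_conjugate[OF kc yc] by simp
  also have "\<dots> = conjugate G k ` centralizer G x0" using centralizer_eq[OF x0 gy(2,3)] by simp
  finally have "x1 \<in> conjugate G k ` centralizer G x0"
    using mem_centralizer_self[OF x1(1)] by simp
  then obtain a where a: "a \<in> centralizer G x0" "x1 = conjugate G k a" by blast
  have "a \<notin> center G" using a x1 conjugate_center[OF kc] by auto
  then have "x1 \<in> noncentral_conjugates x0"
    unfolding noncentral_conjugates_def using a kc by force
  then show False using x1 by simp
qed

lemma finite_center: "finite (center G)"
  using finite_subgroup[OF finite_carrier subgroup_center] .

lemma card_center_pos: "0 < card (center G)"
  using finite_center subgroup.one_closed[OF subgroup_center] by (auto simp: card_gt_0_iff)

lemma card_centralizer_diff_center: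
  "x \<in> carrier G \<Longrightarrow> card (centralizer G x - center G) = card (centralizer G x) - card (center G)"
  using card_Diff_subset[OF finite_center center_subset_centralizer] .

lemma order_le_two_card_noncentral_conjugates:
  assumes x: "x \<in> carrier G" "x \<notin> center G" and not_normal: "\<not> centralizer G x \<lhd> G"
  shows "order G \<le> 2 * card (noncentral_conjugates x)"
proof -
  define c where "c = card (centralizer G x)"
  have "0 < c"
    using finite_subgroup[OF finite_carrier subgroup_centralizer[OF x(1)]] mem_centralizer_self[OF x(1)]
    by (auto simp: c_def card_gt_0_iff)
  have "c \<le> 2 * (c - card (center G))"
    using two_card_center_le_card_centralizer[OF finite_carrier x] by (simp add: c_def)
  then have "c * order G \<le> order G * (2 * (c - card (center G)))"
    using mult_le_mono2 by (simp add: mult.commute)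
  also have "\<dots> = c * (2 * card (noncentral_conjugates x))"
    using card_noncentral_conjugates[OF x not_normal] card_centralizer_diff_center[OF x(1)]
    by (simp add: c_def)
  finally show ?thesis using \<open>0 < c\<close> by simp
qed

lemma noncentral_conjugates_neq:
  assumes x: "x \<in> carrier G" "x \<notin> center G" and not_normal: "\<not> centralizer G x \<lhd> G"
  shows "noncentral_conjugates x \<noteq> carrier G - center G"
proof
  define c where "c = card (centralizer G x)"
  define z where "z = card (center G)"
  assume "noncentral_conjugates x = carrier G - center G"
  then have eq: "order G * (c - z) = c * (order G - z)"
    using card_noncentral_conjugates[OF x not_normal] card_centralizer_diff_center[OF x(1)]
      card_Diff_subset[OF finite_center subgroup.subset[OF subgroup_center]]
    by (simp add: c_def z_def order_def)
  have "z \<le> c" "c \<le> order G"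
    using two_card_center_le_card_centralizer[OF finite_carrier x]
      card_mono[OF finite_carrier centralizer_subset_carrier]
    by (simp_all add: c_def z_def order_def)
  then have "int (order G) * (int c - int z) = int c * (int (order G) - int z)"
    using arg_cong[OF eq, of int] by (simp add: of_nat_diff)
  then have "int z * (int c - int (order G)) = 0" by (simp add: algebra_simps)
  then have "c = order G" using card_center_pos by (simp add: z_def)
  then have "centralizer G x = carrier G"
    using card_subset_eq[OF finite_carrier centralizer_subset_carrier] by (simp add: c_def order_def)
  then show False using centralizer_neq_carrier[OF x] by simp
qed

text \<open>Otherwise there are \<open>x\<^sub>0\<close>, \<open>x\<^sub>1\<close> with disjoint sets \<open>noncentral_conjugates x\<^sub>i\<close> of
  non-central elements, each containing at least half of the group.\<close>

lemma exists_normal_centralizer: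
  assumes "center G \<noteq> carrier G"
  shows "\<exists>x\<in>carrier G. x \<notin> center G \<and> centralizer G x \<lhd> G"
proof (rule ccontr)
  assume "\<not> ?thesis"
  then have not_normal: "\<And>x. x \<in> carrier G \<Longrightarrow> x \<notin> center G \<Longrightarrow> \<not> centralizer G x \<lhd> G"
    by blast
  obtain x0 where x0: "x0 \<in> carrier G" "x0 \<notin> center G"
    using assms subgroup.subset[OF subgroup_center] by blast
  then obtain x1 where x1: "x1 \<in> carrier G" "x1 \<notin> center G" "x1 \<notin> noncentral_conjugates x0"
    using noncentral_conjugates_subset noncentral_conjugates_neq[OF x0 not_normal[OF x0]]
    by blast
  have "finite (carrier G - center G)" using finite_carrier by simp
  then have "card (noncentral_conjugates x0) + card (noncentral_conjugates x1) \<le> card (carrier G - center G)"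
    using card_Un_disjoint[OF _ _ noncentral_conjugates_disjoint[OF x0 x1]] card_mono
      noncentral_conjugates_subset
    by (metis Un_least finite_subset)
  also have "\<dots> < order G"
    using card_Diff_subset[OF finite_center subgroup.subset[OF subgroup_center]] card_center_pos
      finite_carrier order_gt_0_iff_finite by (simp add: order_def)
  finally show False
    using order_le_two_card_noncentral_conjugates[OF x0 not_normal[OF x0]]
      order_le_two_card_noncentral_conjugates[OF x1(1,2) not_normal[OF x1(1,2)]]
    by linarith
qed

end

section \<open>Minimal non-cyclic groups\<close>

locale minimal_noncyclic = group +
  assumes finite_carrier: "finite (carrier G)"
    and squarefree_order: "squarefree (order G)"
    and not_cyclic: "\<not> cyclic_group G"
    and proper_subgroup_cyclic:
      "\<And>K. subgroup K G \<Longrightarrow> K \<noteq> carrier G \<Longrightarrow> cyclic_group (G\<lparr>carrier := K\<rparr>)"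
    and sum_ord_dvd: "\<And>K. subgroup K G \<Longrightarrow> (\<Sum>x\<in>K. ord x) dvd (\<Sum>x\<in>carrier G. ord x)"
begin

lemma proper_subgroup_generator:
  "subgroup K G \<Longrightarrow> K \<noteq> carrier G \<Longrightarrow> \<exists>g\<in>K. ord g = card K"
  using proper_subgroup_cyclic cyclic_subgroup_iff[OF finite_carrier] by blast

sublocale proper_subgroups_abelian
proof
  fix K a b assume "subgroup K G" "K \<noteq> carrier G" "a \<in> K" "b \<in> K"
  then show "a \<otimes> b = b \<otimes> a"
    using proper_subgroup_generator subgroup_commutes_if_ord_eq_card[OF finite_carrier] by blast
qed (rule finite_carrier)

lemma center_neq_carrier: "center G \<noteq> carrier G"
proof
  assume "center G = carrier G"
  then have "a \<otimes> b = b \<otimes> a" if "a \<in> carrier G" "b \<in> carrier G" for a b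
    using that unfolding center_def by blast
  then show False
    using cyclic_if_commutative_squarefree[OF finite_carrier squarefree_order] not_cyclic by blast
qed

end

locale minimal_noncyclic_normal_centralizer = minimal_noncyclic +
  fixes x0
  assumes x0_carrier: "x0 \<in> carrier G" and x0_noncentral: "x0 \<notin> center G"
    and C_normal: "centralizer G x0 \<lhd> G"
begin

abbreviation "C \<equiv> centralizer G x0"

lemma subgroup_C: "subgroup C G" using subgroup_centralizer[OF x0_carrier] .
lemma C_neq_carrier: "C \<noteq> carrier G"
  using centralizer_neq_carrier[OF x0_carrier x0_noncentral] .
lemma finite_C: "finite C" using finite_subgroup[OF finite_carrier subgroup_C] .
lemma center_subset_C: "center G \<subseteq> C" using center_subset_centralizer[OF x0_carrier] .
lemma C_subset_carrier: "C \<subseteq> carrier G" using centralizer_subset_carrier .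

lemma C_maximal: "subgroup K G \<Longrightarrow> C \<subseteq> K \<Longrightarrow> K \<noteq> C \<Longrightarrow> K = carrier G"
  using centralizer_maximal[OF x0_carrier x0_noncentral] by blast

lemma C_inter_centralizer:
  assumes w: "w \<in> carrier G" "w \<notin> C"
  shows "C \<inter> centralizer G w = center G"
proof
  show "center G \<subseteq> C \<inter> centralizer G w"
    using center_subset_C center_subset_centralizer[OF w(1)] by blast
  show "C \<inter> centralizer G w \<subseteq> center G"
  proof
    fix v assume v: "v \<in> C \<inter> centralizer G w"
    show "v \<in> center G"
    proof (rule ccontr)
      assume vZ: "v \<notin> center G"
      have wZ: "w \<notin> center G" using w center_subset_C by blast
      have "centralizer G v = C" using centralizer_eq[OF x0_carrier x0_noncentral] v vZ by blast
      moreover have "centralizer G v = centralizer G w"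
        using centralizer_eq[OF w(1) wZ] v vZ by blast
      ultimately show False using mem_centralizer_self[OF w(1)] w(2) by simp
    qed
  qed
qed

lemma card_centralizer_mult_card_C:
  assumes w: "w \<in> carrier G" "w \<notin> C"
  shows "card (centralizer G w) * card C = order G * card (center G)"
proof -
  have D: "subgroup (centralizer G w) G" using subgroup_centralizer[OF w(1)] .
  have S: "subgroup (C <#> centralizer G w) G" using normal_set_mult_subgroup[OF C_normal D] .
  have "C \<subseteq> C <#> centralizer G w" using subset_set_mult_left[OF D C_subset_carrier] .
  moreover have "w \<in> C <#> centralizer G w"
    using subset_set_mult_right[OF subgroup_C centralizer_subset_carrier] mem_centralizer_self[OF w(1)]
    by blast
  ultimately have "C <#> centralizer G w = carrier G" using C_maximal[OF S] w(2) by blast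
  then have "order G * card (C \<inter> centralizer G w) = card C * card (centralizer G w)"
    using card_set_mult_mult_card_inter[OF finite_carrier subgroup_C D] by (simp add: order_def)
  then show ?thesis using C_inter_centralizer[OF w] by (simp add: mult.commute)
qed

lemma exists_outside_C: "\<exists>w. w \<in> carrier G \<and> w \<notin> C"
  using C_neq_carrier C_subset_carrier by blast

definition index_C :: nat where "index_C = order G div card C"

lemma order_eq_card_C_mult_index_C: "order G = card C * index_C"
  using card_subgroup_dvd_order[OF subgroup_C] by (simp add: index_C_def)

text \<open>A subgroup \<open>R\<close> of prime order \<open>r\<close> dividing the index is not contained in \<open>C\<close> (as \<open>r\<^sup>2\<close>
  does not divide \<open>|G|\<close>), so \<open>C R = G\<close> by maximality and the index is at most \<open>r\<close>.\<close>

lemma prime_index_C: "Factorial_Ring.prime index_C"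
proof -
  have "0 < order G" using finite_carrier order_gt_0_iff_finite by blast
  then have "0 < index_C" using order_eq_card_C_mult_index_C by simp
  have "index_C \<noteq> 1"
    using order_eq_card_C_mult_index_C card_subset_eq[OF finite_carrier C_subset_carrier] C_neq_carrier
    by (auto simp: order_def)
  then obtain r :: nat where r: "Factorial_Ring.prime r" "r dvd index_C"
    using prime_factor_nat by blast
  then have "r dvd card (carrier G)" using order_eq_card_C_mult_index_C by (simp add: order_def)
  then obtain R where R: "subgroup R G" "card R = r"
    using exists_subgroup_prime_card[OF finite_carrier subgroup_self r(1)] by blast
  have "\<not> R \<subseteq> C"
  proof
    assume "R \<subseteq> C"
    then have "r dvd card C" using card_subgroup_dvd_card_subgroup[OF subgroup_C R(1)] R(2) by simp
    then have "r * r dvd order G" unfolding order_eq_card_C_mult_index_C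
      using r(2) by (rule mult_dvd_mono)
    then show False using prime_square_not_dvd_squarefree[OF squarefree_order r(1)] by simp
  qed
  then have "C <#> R = carrier G"
    using C_maximal[OF normal_set_mult_subgroup[OF C_normal R(1)]
        subset_set_mult_left[OF R(1) C_subset_carrier]]
      subset_set_mult_right[OF subgroup_C subgroup.subset[OF R(1)]] by blast
  then have "card C * index_C \<le> card C * r"
    using card_set_mult_le[OF finite_C finite_subgroup[OF finite_carrier R(1)]] R(2)
      order_eq_card_C_mult_index_C by (simp add: order_def)
  then have "index_C \<le> r" using \<open>0 < order G\<close> order_eq_card_C_mult_index_C by simp
  moreover have "r \<le> index_C" using r(2) \<open>0 < index_C\<close> by (simp add: dvd_imp_le)
  ultimately show ?thesis using r(1) by simp
qed

lemma C_commute: "a \<in> C \<Longrightarrow> b \<in> C \<Longrightarrow> a \<otimes> b = b \<otimes> a"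
  using centralizer_commute[OF x0_carrier x0_noncentral] by blast

lemma normal_pow_eq_one_C: "{v \<in> C. v [^] (n::nat) = \<one>} \<lhd> G" (is "?P \<lhd> G")
  unfolding normal_inv_iff
proof (intro conjI ballI)
  show "subgroup ?P G"
  proof (rule subgroupI)
    show "?P \<subseteq> carrier G" using C_subset_carrier by blast
    show "?P \<noteq> {}" using subgroup.one_closed[OF subgroup_C] by auto
    fix a b assume a: "a \<in> ?P" and b: "b \<in> ?P"
    then have ab: "a \<in> carrier G" "b \<in> carrier G" using C_subset_carrier by auto
    show "inv a \<in> ?P" using subgroup.m_inv_closed[OF subgroup_C] a nat_pow_inv[OF ab(1)] by simp
    show "a \<otimes> b \<in> ?P"
      using subgroup.m_closed[OF subgroup_C] a b pow_mult_distrib[OF C_commute ab] by simp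
  qed
  fix g h assume g: "g \<in> carrier G" and h: "h \<in> ?P"
  then have "h \<in> carrier G" using C_subset_carrier by auto
  then have "(g \<otimes> h \<otimes> inv g) [^] n = \<one>"
    using conjugate_pow[OF g, of h n] h g by (simp add: conjugate_def)
  moreover have "g \<otimes> h \<otimes> inv g \<in> C"
    using C_normal g h unfolding normal_inv_iff by blast
  ultimately show "g \<otimes> h \<otimes> inv g \<in> ?P" by simp
qed

text \<open>The elements of \<open>C\<close> of order dividing \<open>p\<close> form a normal subgroup; being proper it is
  cyclic, so it has exactly \<open>p\<close> elements.\<close>

lemma exists_normal_prime_subgroup_of_C:
  assumes p: "Factorial_Ring.prime p" and dvd: "p dvd card C"
  shows "\<exists>P. P \<lhd> G \<and> P \<subseteq> C \<and> card P = p"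
proof -
  define P where "P = {v \<in> C. v [^] p = \<one>}"
  have P: "P \<lhd> G" using normal_pow_eq_one_C by (simp add: P_def)
  have PC: "P \<subseteq> C" unfolding P_def by blast
  obtain S where S: "subgroup S G" "S \<subseteq> C" "card S = p"
    using exists_subgroup_prime_card[OF finite_carrier subgroup_C p dvd] by blast
  then have "S \<subseteq> P" using pow_card_subgroup_eq_one[OF S(1)] by (auto simp: P_def)
  then have "p \<le> card P"
    using card_mono[OF finite_subgroup[OF finite_carrier normal_imp_subgroup[OF P]]] S(3) by metis
  moreover obtain v where v: "v \<in> P" "ord v = card P"
    using proper_subgroup_generator[OF normal_imp_subgroup[OF P]] PC C_neq_carrier C_subset_carrier
    by blast
  then have "ord v dvd p" using pow_eq_id C_subset_carrier by (auto simp: P_def)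
  then have "card P \<le> p" using v(2) prime_gt_0_nat[OF p] by (simp add: dvd_imp_le)
  ultimately show ?thesis using P PC by (intro exI[of _ P]) simp
qed

lemma card_centralizer_outside_C:
  assumes "w \<in> carrier G" "w \<notin> C"
  shows "card (centralizer G w) = index_C * card (center G)"
proof -
  have "card C * card (centralizer G w) = card C * (index_C * card (center G))"
    using card_centralizer_mult_card_C[OF assms] order_eq_card_C_mult_index_C
    by (simp add: ac_simps)
  moreover have "0 < card C"
    using finite_C subgroup.one_closed[OF subgroup_C] by (auto simp: card_gt_0_iff)
  ultimately show ?thesis by simp
qed

lemma card_center_eq_1: "card (center G) = 1"
proof (rule ccontr)
  assume "card (center G) \<noteq> 1"
  then have Z2: "2 \<le> card (center G)" using card_center_pos by simp
  define q where "q = index_C"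
  have q: "Factorial_Ring.prime q" "order G = card C * q"
    using prime_index_C order_eq_card_C_mult_index_C by (simp_all add: q_def)
  obtain a where a: "card C = card (center G) * a"
    using card_subgroup_dvd_card_subgroup[OF subgroup_C subgroup_center center_subset_C] by blast
  have "card (center G) * 2 \<le> card (center G) * a"
    using two_card_center_le_card_centralizer[OF finite_carrier x0_carrier x0_noncentral] a by simp
  then have "2 \<le> a" using card_center_pos by simp
  then obtain p :: nat where p: "Factorial_Ring.prime p" "p dvd a"
    using prime_factor_nat[of a] by auto
  then have "p \<le> a" using \<open>2 \<le> a\<close> by (simp add: dvd_imp_le)
  also have "a < card (center G) * a"
    using mult_less_mono1[of 1 "card (center G)" a] Z2 \<open>2 \<le> a\<close> by simp
  finally have "p < card (center G) * a" .
  obtain P where P: "P \<lhd> G" "P \<subseteq> C" "card P = p"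
    using exists_normal_prime_subgroup_of_C[OF p(1)] p(2) a by auto
  have P_sub: "subgroup P G" using normal_imp_subgroup[OF P(1)] .
  obtain w where w: "w \<in> carrier G" "w \<notin> C" using exists_outside_C by blast
  have "q dvd card (centralizer G w)" using card_centralizer_outside_C[OF w] by (simp add: q_def)
  then obtain Q where Q: "subgroup Q G" "Q \<subseteq> centralizer G w" "card Q = q"
    using exists_subgroup_prime_card[OF finite_carrier subgroup_centralizer[OF w(1)] q(1)] by blast
  have "card (P <#> Q) \<le> p * q"
    using card_set_mult_le[OF finite_subgroup[OF finite_carrier P_sub]
        finite_subgroup[OF finite_carrier Q(1)]] P(3) Q(3) by simp
  also have "\<dots> < card (center G) * a * q"
    using mult_less_mono1[OF \<open>p < card (center G) * a\<close> prime_gt_0_nat[OF q(1)]] .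
  also have "\<dots> = order G" using q(2) a by simp
  finally have PQ: "P <#> Q \<noteq> carrier G" by (auto simp: order_def)
  have "P \<noteq> {\<one>}"
  proof
    assume "P = {\<one>}"
    then have "p = 1" using P(3) by simp
    then show False using p(1) by simp
  qed
  then obtain u where u: "u \<in> P" "u \<noteq> \<one>"
    using subgroup.one_closed[OF P_sub] by blast
  have "ord u = p" using ord_eq_prime_card_subgroup[OF P_sub _ u] P(3) p(1) by simp
  have "u \<notin> center G"
  proof
    assume "u \<in> center G"
    then have "p dvd card (center G)"
      using ord_dvd_card_subgroup[OF subgroup_center] \<open>ord u = p\<close> by metis
    then have "p * p dvd card C" unfolding a using p(2) by (rule mult_dvd_mono)
    then have "p * p dvd order G" unfolding q(2) by (rule dvd_mult2)
    then show False using prime_square_not_dvd_squarefree[OF squarefree_order p(1)] by simp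
  qed
  then have "centralizer G u = C"
    using centralizer_eq[OF x0_carrier x0_noncentral] u(1) P(2) by blast
  moreover have "Q \<subseteq> centralizer G u"
  proof
    fix t assume "t \<in> Q"
    then show "t \<in> centralizer G u"
      using normal_set_mult_commute[OF P(1) Q(1) PQ u(1)] subgroup.mem_carrier[OF Q(1)]
      unfolding centralizer_def by blast
  qed
  ultimately have "Q \<subseteq> center G" using C_inter_centralizer[OF w] Q(2) by blast
  then have "q dvd card (center G)"
    using card_subgroup_dvd_card_subgroup[OF subgroup_center Q(1)] Q(3) by simp
  then have "q * q dvd card (center G) * a * q" by (intro mult_dvd_mono dvd_mult2) simp_all
  then have "q * q dvd order G" using q(2) a by simp
  then show False using prime_square_not_dvd_squarefree[OF squarefree_order q(1)] by simp
qed

lemma card_centralizer_outside_C_eq_index_C: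
  "w \<in> carrier G \<Longrightarrow> w \<notin> C \<Longrightarrow> card (centralizer G w) = index_C"
  using card_centralizer_outside_C card_center_eq_1 by simp

text \<open>A normal subgroup \<open>P \<subseteq> C\<close> of prime order \<open>p < |C|\<close> would make \<open>P C(w)\<close> a proper subgroup
  above the maximal subgroup \<open>C(w)\<close>, hence \<open>P \<subseteq> C \<inter> C(w) = Z(G)\<close>, which is trivial.\<close>

lemma prime_card_C: "Factorial_Ring.prime (card C)"
proof -
  have "2 \<le> card C"
    using two_card_center_le_card_centralizer[OF finite_carrier x0_carrier x0_noncentral]
      card_center_eq_1 by simp
  then obtain p :: nat where p: "Factorial_Ring.prime p" "p dvd card C"
    using prime_factor_nat[of "card C"] by auto
  have "p = card C"
  proof (rule ccontr)
    assume "p \<noteq> card C"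
    moreover have "p \<le> card C"
      using p(2) \<open>2 \<le> card C\<close> by (simp add: dvd_imp_le)
    ultimately have "p < card C" by simp
    obtain P where P: "P \<lhd> G" "P \<subseteq> C" "card P = p"
      using exists_normal_prime_subgroup_of_C[OF p] by blast
    have P_sub: "subgroup P G" using normal_imp_subgroup[OF P(1)] .
    obtain w where w: "w \<in> carrier G" "w \<notin> C" using exists_outside_C by blast
    then have "w \<notin> center G" using center_subset_C by blast
    have D: "subgroup (centralizer G w) G" using subgroup_centralizer[OF w(1)] .
    have "card (P <#> centralizer G w) \<le> p * index_C"
      using card_set_mult_le[OF finite_subgroup[OF finite_carrier P_sub] finite_subgroup[OF finite_carrier D]]
        P(3) card_centralizer_outside_C_eq_index_C[OF w] by simp
    also have "\<dots> < order G"
      using \<open>p < card C\<close> prime_gt_0_nat[OF prime_index_C] order_eq_card_C_mult_index_C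
      by simp
    finally have "P <#> centralizer G w \<noteq> carrier G" by (auto simp: order_def)
    then have "P <#> centralizer G w = centralizer G w"
      using centralizer_maximal[OF w(1) \<open>w \<notin> center G\<close> normal_set_mult_subgroup[OF P(1) D]]
        subset_set_mult_right[OF P_sub centralizer_subset_carrier] by blast
    then have "P \<subseteq> centralizer G w"
      using subset_set_mult_left[OF D subgroup.subset[OF P_sub]] by simp
    then have "P \<subseteq> center G" using C_inter_centralizer[OF w] P(2) by blast
    then have "card P \<le> card (center G)" using card_mono[OF finite_center] by blast
    then show False using P(3) card_center_eq_1 prime_ge_2_nat[OF p(1)] by simp
  qed
  then show ?thesis using p(1) by simp
qed

lemma ord_outside_C: "w \<in> carrier G \<Longrightarrow> w \<notin> C \<Longrightarrow> ord w = index_C"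
  using ord_eq_prime_card_subgroup[OF subgroup_centralizer _ mem_centralizer_self]
    card_centralizer_outside_C_eq_index_C prime_index_C subgroup.one_closed[OF subgroup_C]
  by metis

lemma sum_ord_carrier:
  "(\<Sum>x\<in>carrier G. ord x) = 1 + (card C - 1) * card C + (card C * index_C - card C) * index_C"
proof -
  have "(\<Sum>x\<in>carrier G - C. ord x) = card (carrier G - C) * index_C"
    using ord_outside_C by simp
  also have "card (carrier G - C) = card C * index_C - card C"
    using card_Diff_subset[OF finite_C C_subset_carrier] order_eq_card_C_mult_index_C
    by (simp add: order_def)
  finally have "(\<Sum>x\<in>carrier G - C. ord x) = (card C * index_C - card C) * index_C" .
  moreover have "(\<Sum>x\<in>carrier G. ord x) = (\<Sum>x\<in>C. ord x) + (\<Sum>x\<in>carrier G - C. ord x)"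
    using sum.subset_diff[OF C_subset_carrier finite_carrier] by (simp add: add.commute)
  ultimately show ?thesis using sum_ord_prime_subgroup[OF subgroup_C prime_card_C] by simp
qed

lemma contradiction: False
proof -
  obtain w where w: "w \<in> carrier G" "w \<notin> C" using exists_outside_C by blast
  have "(1 + (card C - 1) * card C) dvd (\<Sum>x\<in>carrier G. ord x)"
    using sum_ord_dvd[OF subgroup_C] sum_ord_prime_subgroup[OF subgroup_C prime_card_C] by simp
  moreover have "(1 + (index_C - 1) * index_C) dvd (\<Sum>x\<in>carrier G. ord x)"
    using sum_ord_dvd[OF subgroup_centralizer[OF w(1)]]
      sum_ord_prime_subgroup[OF subgroup_centralizer[OF w(1)]]
      card_centralizer_outside_C_eq_index_C[OF w] prime_index_C by simp
  ultimately show False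
    using psi_primes_not_both_dvd[OF prime_ge_2_nat[OF prime_card_C] prime_ge_2_nat[OF prime_index_C]]
    unfolding sum_ord_carrier by blast
qed

end

context minimal_noncyclic
begin

lemma contradiction: False
proof -
  obtain x where "x \<in> carrier G" "x \<notin> center G" "centralizer G x \<lhd> G"
    using exists_normal_centralizer[OF center_neq_carrier] by blast
  then interpret minimal_noncyclic_normal_centralizer G x
    by (intro minimal_noncyclic_normal_centralizer.intro minimal_noncyclic_axioms
        minimal_noncyclic_normal_centralizer_axioms.intro)
  show False by (rule contradiction)
qed

end

context group
begin

lemma cyclic_if_proper_subgroups_cyclic:
  assumes "finite (carrier G)" "squarefree (order G)"
    and "\<And>K. subgroup K G \<Longrightarrow> K \<noteq> carrier G \<Longrightarrow> cyclic_group (G\<lparr>carrier := K\<rparr>)"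
    and "\<And>K. subgroup K G \<Longrightarrow> (\<Sum>x\<in>K. ord x) dvd (\<Sum>x\<in>carrier G. ord x)"
  shows "cyclic_group G"
proof (rule ccontr)
  assume "\<not> cyclic_group G"
  with assms interpret minimal_noncyclic G by unfold_locales
  show False by (rule contradiction)
qed

lemma cyclic_squarefree_if_sum_ord_dvd:
  assumes fin: "finite (carrier G)"
    and dvd: "\<And>H K. subgroup H G \<Longrightarrow> subgroup K G \<Longrightarrow> K \<subseteq> H \<Longrightarrow>
      (\<Sum>x\<in>K. ord x) dvd (\<Sum>x\<in>H. ord x)"
  shows "cyclic_group G \<and> squarefree (order G)"
proof -
  have sqf: "squarefree (order G)" using squarefree_order_if_sum_ord_dvd[OF fin dvd] .
  have "cyclic_group (G\<lparr>carrier := H\<rparr>)" if "subgroup H G" for H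
    using that
  proof (induction "card H" arbitrary: H rule: less_induct)
    case less
    note H = less.prems
    interpret H: group "G\<lparr>carrier := H\<rparr>" using subgroup_imp_group[OF H] .
    have sub_H: "subgroup K G \<and> K \<subseteq> H" if "subgroup K (G\<lparr>carrier := H\<rparr>)" for K
      using incl_subgroup[OF H that] subgroup.subset[OF that] by simp
    show ?case
    proof (rule H.cyclic_if_proper_subgroups_cyclic)
      show "finite (carrier (G\<lparr>carrier := H\<rparr>))"
        using finite_subgroup[OF fin H] by simp
      show "squarefree (order (G\<lparr>carrier := H\<rparr>))"
        using squarefree_mono[OF card_subgroup_dvd_order[OF H] sqf] by (simp add: order_def)
    next
      fix K assume K: "subgroup K (G\<lparr>carrier := H\<rparr>)" "K \<noteq> carrier (G\<lparr>carrier := H\<rparr>)"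
      then have "K \<subset> H" using sub_H by auto
      then have "card K < card H" using psubset_card_mono[OF finite_subgroup[OF fin H]] by blast
      then show "cyclic_group (G\<lparr>carrier := H, carrier := K\<rparr>)"
        using less.hyps sub_H K(1) by simp
    next
      fix K assume "subgroup K (G\<lparr>carrier := H\<rparr>)"
      then show "(\<Sum>x\<in>K. H.ord x) dvd (\<Sum>x\<in>carrier (G\<lparr>carrier := H\<rparr>). H.ord x)"
        using dvd[OF H] sub_H by (simp add: ord_subgroup[OF H])
    qed
  qed
  from this[OF subgroup_self] show ?thesis using sqf by simp
qed

end

theorem theorem2p2:
  fixes G :: "('a, 'b) monoid_scheme"
  assumes "group G" and "finite (carrier G)"
  shows "(\<forall>H. subgroup H G \<longrightarrow> psi_divisible (G\<lparr>carrier := H\<rparr>))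
         \<longleftrightarrow> (cyclic_group G \<and> squarefree (order G))"
proof -
  interpret group G by fact
  show ?thesis
    unfolding psi_divisible_subgroups_iff
    using cyclic_squarefree_if_sum_ord_dvd[OF assms(2)] sum_ord_dvd_if_cyclic_squarefree[OF assms(2)]
    by blast
qed

end
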